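(* Let $n\ge 2$, $c=s_{n-1}s_{n-2}\cdots s_1\in S_n$, and let $k_1,\dots,k_r\in[n-1]$ satisfy $|k_i-k_j|>1$ for all $i\ne j$. Then none of the Plücker relations $R^k_{J,L}$ degenerates to a monomial in $\operatorname{in}_{\mathbf w}(\mathcal I_{cs_{k_1}\cdots s_{k_r}})$.
   Context: Notation: $[a,b]=\{a,\dots,b\}$, $[b]=[1,b]$. $S_n$ is the symmetric group with simple reflections $s_i=(i,i+1)$. For $v\in S_n$, $v([k])=\{v(1),\dots,v(k)\}$; for $k$-subsets $I=\{a_1<\dots<a_k\}$, $K=\{b_1<\dots<b_k\}$ of $[n]$, $I\le K$ iff $a_r\le b_r$ for all $r$. $A_n=\mathbb C[p_I:I\subseteq[n],1\le|I|\le n-1]$; for a sequence of distinct elements, $p$ of the sequence is the signed coordinate of the underlying set (sign of the sorting permutation), and $0$ for sequences with repeats. Plücker relations: for sequences $J=(j_1,\dots,j_e)$, $L=(l_1,\dots,l_d)$ of distinct elements of $[n]$ with $1\le e\le d\le n-1$ and $k\in[e]$, $R^k_{J,L}=p_Jp_L-\sum_{1\le r_1<\dots<r_k\le d}p_{J'}p_{L'}$, with $J'$ obtained from $J$ by replacing $j_t$ by $l_{r_t}$ and $L'$ from $L$ by replacing $l_{r_t}$ by $j_t$. $\mathcal I_{\mathrm{Fl}_n}$ is generated by all $R^k_{J,L}$, and $\mathcal I_v=\mathcal I_{\mathrm{Fl}_n}+(p_I:I\not\le v([|I|]))$. Weight $\mathbf w_I=\#\{a\in I:|I|\le a\le n-1\}$;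 $\operatorname{in}_{\mathbf w}(f)$ is the sum of the terms of $f$ of minimal weight (weight of $\prod p_I^{\alpha_I}$ is $\sum\alpha_I\mathbf w_I$); $\operatorname{in}_{\mathbf w}(\mathcal I)$ is generated by the $\operatorname{in}_{\mathbf w}(f)$, $f\in\mathcal I$. A Plücker relation $R^k_{J,L}$ degenerates to a monomial in $\operatorname{in}_{\mathbf w}(\mathcal I_v)$ if the image of $\operatorname{in}_{\mathbf w}(R^k_{J,L})$ in $A_n/(p_I:I\not\le v([|I|]))$ is a nonzero scalar multiple of a single monomial. *)

theory Defs
  imports Main "HOL-Library.Multiset"
begin

definition srefl :: "nat \<Rightarrow> nat \<Rightarrow> nat" where
  "srefl i x = (if x = i then Suc i else if x = Suc i then i else x)"

(* product s_{i_1} s_{i_2} ... s_{i_m} (composition of functions, applied right to left) *)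
definition sprod :: "nat list \<Rightarrow> nat \<Rightarrow> nat" where
  "sprod is = foldr (\<lambda>i f. srefl i \<circ> f) is id"

definition coxc :: "nat \<Rightarrow> nat \<Rightarrow> nat" where
  "coxc n = sprod (rev [1..<n])"

definition subset_le :: "nat set \<Rightarrow> nat set \<Rightarrow> bool" where
  "subset_le I K \<longleftrightarrow> card I = card K \<and>
     (\<forall>r < card I. sorted_list_of_set I ! r \<le> sorted_list_of_set K ! r)"

(* monomials in the variables p_I: multisets of index sets; polynomials: coefficient functions *)
type_synonym monom = "nat set multiset"
type_synonym poly = "monom \<Rightarrow> int"

(* sign of the permutation sorting a sequence of distinct elements *)
definition seq_sign :: "nat list \<Rightarrow> int" where
  "seq_sign xs = (-1) ^ card {(i, j). i < j \<and> j < length xs \<and> xs ! j < xs ! i}"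

(* the polynomial p_xs * p_ys (p of a sequence with repeats is 0) *)
definition pprod :: "nat list \<Rightarrow> nat list \<Rightarrow> poly" where
  "pprod xs ys = (\<lambda>m. if distinct xs \<and> distinct ys \<and> m = {#set xs, set ys#}
                        then seq_sign xs * seq_sign ys else 0)"

(* J' and L' for the (0-based) index set S = {r_1 < ... < r_k} \<subseteq> {0..<d} *)
definition Jprime :: "nat list \<Rightarrow> nat list \<Rightarrow> nat set \<Rightarrow> nat list" where
  "Jprime J L S = (let rs = sorted_list_of_set S in
      fold (\<lambda>t ys. ys[t := L ! (rs ! t)]) [0..<card S] J)"

definition Lprime :: "nat list \<Rightarrow> nat list \<Rightarrow> nat set \<Rightarrow> nat list" where
  "Lprime J L S = (let rs = sorted_list_of_set S in
      fold (\<lambda>t ys. ys[rs ! t := J ! t]) [0..<card S] L)"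

definition plucker :: "nat list \<Rightarrow> nat list \<Rightarrow> nat \<Rightarrow> poly" where
  "plucker J L k = (\<lambda>m. pprod J L m -
      (\<Sum>S \<in> {S. S \<subseteq> {0..<length L} \<and> card S = k}. pprod (Jprime J L S) (Lprime J L S) m))"

definition wt :: "nat \<Rightarrow> nat set \<Rightarrow> nat" where
  "wt n I = card {a \<in> I. card I \<le> a \<and> a \<le> n - 1}"

definition mweight :: "nat \<Rightarrow> monom \<Rightarrow> nat" where
  "mweight n m = sum_mset (image_mset (wt n) m)"

definition init_w :: "nat \<Rightarrow> poly \<Rightarrow> poly" where
  "init_w n f = (\<lambda>m. if f m \<noteq> 0 \<and> (\<forall>m'. f m' \<noteq> 0 \<longrightarrow> mweight n m \<le> mweight n m')
                      then f m else 0)"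

(* image in A_n / (p_I : I not \<le> v([|I|])) : kill monomials containing such a variable *)
definition kill :: "(nat \<Rightarrow> nat) \<Rightarrow> poly \<Rightarrow> poly" where
  "kill v f = (\<lambda>m. if (\<forall>I \<in># m. subset_le I (v ` {1..card I})) then f m else 0)"

definition degenerates :: "nat \<Rightarrow> (nat \<Rightarrow> nat) \<Rightarrow> nat list \<Rightarrow> nat list \<Rightarrow> nat \<Rightarrow> bool" where
  "degenerates n v J L k \<longleftrightarrow> (\<exists>!m. kill v (init_w n (plucker J L k)) m \<noteq> 0)"

end

theory Submission
  imports Defs
begin

(*
  Write v = c s_k1 ... s_kr and T = {k1, ..., kr}. Since no two elements of T are adjacent,
  v([m]) is [1,m-1] \<union> {n} for m \<notin> T and [1,m-2] \<union> {m,n} for m \<in> T. Hence p_I with |I| = m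
  survives in the quotient iff I \<supseteq> [1,m-1], resp. I \<supseteq> [1,m-2] and I meets {m-1,m}.

  Let P and Q be the sets of the first k and of the last |J| - k entries of J. Besides p_J p_L,
  the nonzero terms of R^k_{J,L} come from the k-subsets X of L with X \<inter> Q = {} and
  P \<inter> L \<subseteq> X. If P \<subseteq> L, or |J| = |L| and Q \<subseteq> L, there is exactly one such X and its term
  cancels p_J p_L. Otherwise a surviving monomial p_A p_B has A \<inter> B = J \<inter> L \<supseteq> [1,|J|-2],
  which forces P - L = {y}. The monomials of R are then the exchanges p_(J-y+z) p_(L+y-z), all
  with nonzero coefficient, and a case analysis on z shows that next to a surviving exchange
  of minimal weight there is always a second one.
*)

section \<open>The sets v([m])\<close>

lemma srefl_involutive: "srefl i (srefl i x) = x"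
  by (auto simp: srefl_def)

lemma srefl_image_stable:
  assumes "i \<in> Y \<longleftrightarrow> Suc i \<in> Y"
  shows "srefl i ` Y = Y"
proof
  show "srefl i ` Y \<subseteq> Y" using assms by (auto simp: srefl_def)
  show "Y \<subseteq> srefl i ` Y"
  proof
    fix x assume "x \<in> Y"
    then have "srefl i x \<in> Y" using assms by (auto simp: srefl_def)
    then show "x \<in> srefl i ` Y" by (metis image_eqI srefl_involutive)
  qed
qed

lemma srefl_image_atLeastAtMost:
  assumes "1 \<le> m"
  shows "srefl m ` {1..m} = {1..<m} \<union> {m+1}"
proof -
  have "{1..m} = insert m {1..<m}" using assms by auto
  moreover have "srefl m ` {1..<m} = {1..<m}" by (auto simp: srefl_def)
  ultimately show ?thesis by (auto simp: srefl_def)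
qed

lemma sprod_Cons: "sprod (i # js) = srefl i \<circ> sprod js"
  by (simp add: sprod_def)

lemma sprod_image_atLeastAtMost:
  assumes "distinct ks" "\<forall>a\<in>set ks. 1 \<le> a \<and> a + 1 \<notin> set ks" "1 \<le> m"
  shows "sprod ks ` {1..m} = (if m \<in> set ks then {1..<m} \<union> {m+1} else {1..m})"
  using assms
proof (induction ks)
  case Nil
  then show ?case by (simp add: sprod_def)
next
  case (Cons i js)
  have IH: "sprod js ` {1..m} = (if m \<in> set js then {1..<m} \<union> {m+1} else {1..m})"
    using Cons by auto
  have step: "sprod (i # js) ` {1..m} = srefl i ` (sprod js ` {1..m})"
    by (simp add: sprod_Cons image_comp)
  show ?case
  proof (cases "m = i")
    case True
    then show ?thesis using Cons step IH srefl_image_atLeastAtMost by auto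
  next
    case False
    have "i + 1 \<noteq> m" "m + 1 \<noteq> i" if "m \<in> set js" using Cons.prems that by auto
    then have "srefl i ` (if m \<in> set js then {1..<m} \<union> {m+1} else {1..m})
        = (if m \<in> set js then {1..<m} \<union> {m+1} else {1..m})"
      using False Cons.prems by (intro srefl_image_stable) auto
    then show ?thesis using False step IH by simp
  qed
qed

lemma coxc_apply:
  assumes "1 \<le> n"
  shows "coxc n x = (if x = 1 then n else if 2 \<le> x \<and> x \<le> n then x - 1 else x)"
  using assms
proof (induction n rule: dec_induct)
  case base
  then show ?case by (simp add: coxc_def sprod_def)
next
  case (step n)
  have "rev [1..<Suc n] = n # rev [1..<n]" using step(1) by simp
  then have "coxc (Suc n) = srefl n \<circ> coxc n" by (simp add: coxc_def sprod_Cons)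
  then show ?case using step by (auto simp: srefl_def)
qed

lemma coxc_image_atLeastAtMost:
  assumes "1 \<le> m" "m < n"
  shows "coxc n ` {1..m} = {1..<m} \<union> {n}"
proof -
  have "{1..m} = insert 1 (Suc ` {1..m-1})" using assms by (auto simp: image_Suc_atLeastAtMost)
  then have "coxc n ` {1..m} = insert (coxc n 1) ((coxc n \<circ> Suc) ` {1..m-1})"
    by (simp only: image_insert image_comp)
  also have "(coxc n \<circ> Suc) ` {1..m-1} = id ` {1..m-1}"
    by (rule image_cong) (use assms in \<open>auto simp: coxc_apply\<close>)
  finally show ?thesis using assms by (auto simp: coxc_apply)
qed

lemma coxc_sprod_image:
  assumes "distinct ks" "\<forall>a\<in>set ks. 1 \<le> a \<and> a + 1 \<notin> set ks" "1 \<le> m" "m < n"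
  shows "(coxc n \<circ> sprod ks) ` {1..m} =
    (if m \<notin> set ks then {1..<m} \<union> {n} else if m = 1 then {1} else {1..<m-1} \<union> {m, n})"
proof -
  have img: "(coxc n \<circ> sprod ks) ` {1..m} = coxc n ` (sprod ks ` {1..m})"
    by (simp add: image_comp)
  show ?thesis
  proof (cases "m \<in> set ks")
    case False
    then show ?thesis
      using img sprod_image_atLeastAtMost[OF assms(1-3)] coxc_image_atLeastAtMost[OF assms(3,4)]
      by simp
  next
    case True
    have "(coxc n \<circ> sprod ks) ` {1..m} = coxc n ` {1..<m} \<union> {coxc n (m+1)}"
      using True img sprod_image_atLeastAtMost[OF assms(1-3)] by simp
    moreover have "coxc n ` {1..<m} = {1..<m-1} \<union> {n}" if "2 \<le> m"
      using coxc_image_atLeastAtMost[of "m-1" n] that assms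
      by (simp add: atLeastLessThanSuc_atLeastAtMost[symmetric])
    moreover have "coxc n (m+1) = m" using assms by (simp add: coxc_apply)
    ultimately show ?thesis using True assms(3) by (cases "m = 1") (simp_all add: insert_commute)
  qed
qed

section \<open>Comparison with v([m])\<close>

lemma sorted_list_of_set_nth_le_iff:
  assumes "finite I" "r < card I"
  shows "sorted_list_of_set I ! r \<le> c \<longleftrightarrow> r < card {x\<in>I. x \<le> c}"
proof -
  define s where "s = sorted_list_of_set I"
  have s: "sorted s" "distinct s" "set s = I" "length s = card I"
    using assms(1) by (simp_all add: s_def)
  have inj: "inj_on (nth s) A" if "A \<subseteq> {0..<length s}" for A
    by (rule inj_on_nth[OF s(2)]) (use that in auto)
  show ?thesis unfolding s_def[symmetric]
  proof
    assume r: "s ! r \<le> c"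
    have "nth s ` {0..r} \<subseteq> {x\<in>I. x \<le> c}"
    proof (rule image_subsetI)
      fix i assume "i \<in> {0..r}"
      then have "i \<le> r" "r < length s" using assms(2) s(4) by auto
      then show "s ! i \<in> {x\<in>I. x \<le> c}"
        using r sorted_nth_mono[OF s(1)] s(3) by fastforce
    qed
    then have "card (nth s ` {0..r}) \<le> card {x\<in>I. x \<le> c}"
      by (intro card_mono) (simp_all add: assms(1))
    moreover have "{0..r} \<subseteq> {0..<length s}" using assms(2) s(4) by auto
    ultimately show "r < card {x\<in>I. x \<le> c}" using card_image[OF inj] by simp
  next
    assume r: "r < card {x\<in>I. x \<le> c}"
    show "s ! r \<le> c"
    proof (rule ccontr)
      assume big: "\<not> s ! r \<le> c"
      have "{x\<in>I. x \<le> c} \<subseteq> nth s ` {0..<r}"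
      proof
        fix x assume x: "x \<in> {x\<in>I. x \<le> c}"
        then obtain i where i: "i < length s" "x = s ! i" using s(3) by (auto simp: in_set_conv_nth)
        have "\<not> r \<le> i" using sorted_nth_mono[OF s(1), of r i] i x big by auto
        then show "x \<in> nth s ` {0..<r}" using i by auto
      qed
      then have "card {x\<in>I. x \<le> c} \<le> card (nth s ` {0..<r})" by (intro card_mono) simp_all
      also have "\<dots> \<le> r" using card_image_le[of "{0..<r}" "nth s"] by simp
      finally show False using r by simp
    qed
  qed
qed

lemma subset_le_iff_card:
  assumes "finite I" "finite K" "card I = card K"
  shows "subset_le I K \<longleftrightarrow> (\<forall>r<card K. r < card {x\<in>I. x \<le> sorted_list_of_set K ! r})"
  unfolding subset_le_def using assms sorted_list_of_set_nth_le_iff[OF assms(1)] by metis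

lemma atLeastAtMost_subset_iff_card:
  assumes "I \<subseteq> {1..}"
  shows "{1..c} \<subseteq> I \<longleftrightarrow> c \<le> card {x\<in>I. x \<le> c}"
proof -
  have sub: "{x\<in>I. x \<le> c} \<subseteq> {1..c}" using assms by auto
  have "{1..c} \<subseteq> I \<longleftrightarrow> {x\<in>I. x \<le> c} = {1..c}" using sub by auto
  also have "\<dots> \<longleftrightarrow> card {1..c} \<le> card {x\<in>I. x \<le> c}"
    using card_seteq[OF _ sub] card_mono[OF _ sub] by fastforce
  finally show ?thesis by simp
qed

lemma atLeastAtMost_subset_iff_counts:
  assumes "I \<subseteq> {1..}"
  shows "{1..p} \<subseteq> I \<longleftrightarrow> (\<forall>r<p. r < card {x\<in>I. x \<le> r + 1})"
proof
  assume "{1..p} \<subseteq> I"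
  then have "{1..r+1} \<subseteq> I" if "r < p" for r using that by auto
  then show "\<forall>r<p. r < card {x\<in>I. x \<le> r + 1}"
    using atLeastAtMost_subset_iff_card[OF assms] by (simp add: Suc_le_eq)
next
  assume counts: "\<forall>r<p. r < card {x\<in>I. x \<le> r + 1}"
  show "{1..p} \<subseteq> I"
  proof
    fix c assume c: "c \<in> {1..p}"
    then have "c - 1 < p" by auto
    then have "c - 1 < card {x\<in>I. x \<le> c}" using counts c by auto
    then have "c \<le> card {x\<in>I. x \<le> c}" using c by linarith
    then show "c \<in> I" using atLeastAtMost_subset_iff_card[OF assms, of c] c by auto
  qed
qed

lemma subset_le_initial_iff:
  assumes I: "I \<subseteq> {1..n}" "card I = m" and m: "1 \<le> m" "m < n"
  shows "subset_le I ({1..<m} \<union> {n}) \<longleftrightarrow> {1..<m} \<subseteq> I"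
proof -
  have finI: "finite I" using I(1) finite_subset by blast
  have sorted: "sorted_list_of_set ({1..<m} \<union> {n}) = [1..<m] @ [n]"
    using m sorted_list_of_set.idem_if_sorted_distinct[of "[1..<m] @ [n]"]
    by (simp add: sorted_append)
  have card: "card ({1..<m} \<union> {n}) = m" using m by simp
  have below_n: "{x\<in>I. x \<le> n} = I" using I(1) by auto
  have "subset_le I ({1..<m} \<union> {n})
      \<longleftrightarrow> (\<forall>r<m. r < card {x\<in>I. x \<le> ([1..<m] @ [n]) ! r})"
    using subset_le_iff_card[OF finI _ ] I(2) card sorted by simp
  also have "\<dots> \<longleftrightarrow> (\<forall>r<m-1. r < card {x\<in>I. x \<le> r + 1})"
    using m I(2) below_n by (auto simp: nth_append less_Suc_eq less_diff_conv)
  also have "\<dots> \<longleftrightarrow> {1..m-1} \<subseteq> I"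
    using atLeastAtMost_subset_iff_counts[of I "m-1"] I(1) by fastforce
  finally show ?thesis using m by (simp add: atLeastLessThanSuc_atLeastAtMost[symmetric])
qed

lemma all_less_split_last_two:
  fixes m :: nat
  assumes "2 \<le> m"
  shows "(\<forall>r<m. P r) \<longleftrightarrow> (\<forall>r<m-2. P r) \<and> P (m-2) \<and> P (m-1)"
proof
  show "(\<forall>r<m-2. P r) \<and> P (m-2) \<and> P (m-1)" if "\<forall>r<m. P r" using that assms by simp
next
  assume H: "(\<forall>r<m-2. P r) \<and> P (m-2) \<and> P (m-1)"
  show "\<forall>r<m. P r"
  proof (intro allI impI)
    fix r assume "r < m"
    then have "r < m-2 \<or> r = m-2 \<or> r = m-1" by linarith
    then show "P r" using H by auto
  qed
qed

lemma pred_le_card_atMost_iff: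
  assumes "I \<subseteq> {1..}" "{1..m-2} \<subseteq> I" "2 \<le> m"
  shows "m - 1 \<le> card {x\<in>I. x \<le> m} \<longleftrightarrow> m - 1 \<in> I \<or> m \<in> I"
proof -
  have "{x\<in>I. x \<le> m} = {1..m-2} \<union> ({m-1, m} \<inter> I)" using assms by auto
  moreover have "card ({1..m-2} \<union> ({m-1, m} \<inter> I)) = m - 2 + card ({m-1, m} \<inter> I)"
    using assms(3) by (subst card_Un_disjoint) auto
  ultimately have "m - 1 \<le> card {x\<in>I. x \<le> m} \<longleftrightarrow> 0 < card ({m-1, m} \<inter> I)"
    using assms(3) by arith
  also have "\<dots> \<longleftrightarrow> m - 1 \<in> I \<or> m \<in> I" by (auto simp: card_gt_0_iff)
  finally show ?thesis .
qed

lemma subset_le_initial2_iff: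
  assumes I: "I \<subseteq> {1..n}" "card I = m" and m: "2 \<le> m" "m < n"
  shows "subset_le I ({1..<m-1} \<union> {m, n}) \<longleftrightarrow> {1..<m-1} \<subseteq> I \<and> (m-1 \<in> I \<or> m \<in> I)"
proof -
  have finI: "finite I" using I(1) finite_subset by blast
  have I1: "I \<subseteq> {1..}" using I(1) by auto
  have "sorted_list_of_set (set ([1..<m-1] @ [m, n])) = [1..<m-1] @ [m, n]"
    by (rule sorted_list_of_set.idem_if_sorted_distinct) (use m in \<open>auto simp: sorted_append\<close>)
  moreover have "set ([1..<m-1] @ [m, n]) = {1..<m-1} \<union> {m, n}" by auto
  ultimately have sorted: "sorted_list_of_set ({1..<m-1} \<union> {m, n}) = [1..<m-1] @ [m, n]"
    by simp
  have card: "card ({1..<m-1} \<union> {m, n}) = m" using m by simp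
  have below_n: "{x\<in>I. x \<le> n} = I" using I(1) by auto
  have "subset_le I ({1..<m-1} \<union> {m, n})
      \<longleftrightarrow> (\<forall>r<m. r < card {x\<in>I. x \<le> ([1..<m-1] @ [m, n]) ! r})"
    using subset_le_iff_card[OF finI _ ] I(2) card sorted by simp
  also have "\<dots> \<longleftrightarrow> (\<forall>r<m-2. r < card {x\<in>I. x \<le> r + 1}) \<and> m - 2 < card {x\<in>I. x \<le> m}"
  proof -
    have nth: "([1..<m-1] @ [m, n]) ! r = (if r < m-2 then r+1 else if r = m-2 then m else n)"
      if "r < m" for r using that m by (auto simp: nth_append nth_Cons')
    then show ?thesis unfolding all_less_split_last_two[OF m(1)] using I(2) below_n m by simp
  qed
  also have "\<dots> \<longleftrightarrow> {1..m-2} \<subseteq> I \<and> m - 1 \<le> card {x\<in>I. x \<le> m}"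
    using atLeastAtMost_subset_iff_counts[OF I1, of "m-2"] m by auto
  also have "\<dots> \<longleftrightarrow> {1..<m-1} \<subseteq> I \<and> (m-1 \<in> I \<or> m \<in> I)"
  proof -
    have "{1..<m-1} = {1..m-2}" using m by auto
    then show ?thesis using pred_le_card_atMost_iff[OF I1 _ m(1)] by auto
  qed
  finally show ?thesis .
qed

lemma subset_le_singleton_iff:
  assumes "I \<subseteq> {1..}" "card I = 1"
  shows "subset_le I {1} \<longleftrightarrow> 1 \<in> I"
proof -
  obtain a where a: "I = {a}" using assms(2) card_1_singletonE by blast
  then show ?thesis using assms(1) by (auto simp: subset_le_def)
qed

definition le_cox_image :: "nat set \<Rightarrow> nat \<Rightarrow> nat set \<Rightarrow> bool" where
  "le_cox_image T m I \<longleftrightarrow>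
     (m \<notin> T \<and> {1..<m} \<subseteq> I) \<or> (m \<in> T \<and> {1..<m-1} \<subseteq> I \<and> (m-1 \<in> I \<or> m \<in> I))"

lemma subset_le_coxc_sprod_iff:
  assumes ks: "distinct ks" "\<forall>a\<in>set ks. 1 \<le> a \<and> a + 1 \<notin> set ks"
    and I: "I \<subseteq> {1..n}" "1 \<le> card I" "card I < n"
  shows "subset_le I ((coxc n \<circ> sprod ks) ` {1..card I}) \<longleftrightarrow> le_cox_image (set ks) (card I) I"
proof -
  have I1: "I \<subseteq> {1..}" using I(1) by auto
  consider "card I \<notin> set ks" | "card I \<in> set ks" "card I = 1" | "card I \<in> set ks" "2 \<le> card I"
    using I(2) by linarith
  then show ?thesis
  proof cases
    case 1
    then show ?thesis
      using coxc_sprod_image[OF ks I(2,3)] subset_le_initial_iff[OF I(1) refl I(2,3)]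
      by (simp add: le_cox_image_def)
  next
    case 2
    moreover have "0 \<notin> I" using I1 by auto
    ultimately show ?thesis using coxc_sprod_image[OF ks I(2,3)] subset_le_singleton_iff[OF I1]
      by (simp add: le_cox_image_def)
  next
    case 3
    then show ?thesis
      using coxc_sprod_image[OF ks I(2,3)] subset_le_initial2_iff[OF I(1) refl 3(2) I(3)]
      by (simp add: le_cox_image_def)
  qed
qed

section \<open>The exchanged sequences\<close>

lemma length_fold_list_update: "length (fold (\<lambda>t ys. ys[p t := g t]) [0..<k] xs) = length xs"
  by (induction k) auto

lemma nth_fold_list_update_other:
  assumes "i \<notin> p ` {0..<k}"
  shows "fold (\<lambda>t ys. ys[p t := g t]) [0..<k] xs ! i = xs ! i"
  using assms
proof (induction k)
  case (Suc k)
  then have "i \<noteq> p k" "i \<notin> p ` {0..<k}" by auto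
  then show ?case using Suc.IH by (simp add: nth_list_update)
qed simp

lemma nth_fold_list_update:
  assumes "inj_on p {0..<k}" "\<forall>t<k. p t < length xs" "t < k"
  shows "fold (\<lambda>t ys. ys[p t := g t]) [0..<k] xs ! p t = g t"
  using assms
proof (induction k)
  case 0
  then show ?case by simp
next
  case (Suc k)
  show ?case
  proof (cases "t = k")
    case True
    then show ?thesis using Suc.prems(2) by (simp add: length_fold_list_update)
  next
    case False
    then have "t < k" "p k \<noteq> p t" using Suc.prems by (auto simp: inj_on_def)
    then show ?thesis using Suc by (simp add: nth_list_update inj_on_def)
  qed
qed

definition set_enum :: "nat set \<Rightarrow> nat \<Rightarrow> nat" where
  "set_enum S t = sorted_list_of_set S ! t"

lemma set_enum_strict_mono:
  assumes "finite S" "a < b" "b < card S"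
  shows "set_enum S a < set_enum S b"
  using assms sorted_wrt_nth_less[OF strict_sorted_list_of_set, of a b S]
  by (simp add: set_enum_def)

lemma inj_on_set_enum: "inj_on (set_enum S) {0..<card S}"
  unfolding set_enum_def by (rule inj_on_nth) auto

lemma set_enum_image: "finite S \<Longrightarrow> set_enum S ` {0..<card S} = S"
  unfolding set_enum_def using nth_image[of "card S" "sorted_list_of_set S"] by simp

lemma Jprime_eq: "Jprime J L S = fold (\<lambda>t ys. ys[t := L ! set_enum S t]) [0..<card S] J"
  by (simp add: Jprime_def set_enum_def Let_def)

lemma Lprime_eq: "Lprime J L S = fold (\<lambda>t ys. ys[set_enum S t := J ! t]) [0..<card S] L"
  by (simp add: Lprime_def set_enum_def Let_def)

context
  fixes J L :: "nat list" and S :: "nat set" and k :: nat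
  assumes S: "S \<subseteq> {0..<length L}" "card S = k" and kJ: "k \<le> length J"
begin

lemma finite_S: "finite S"
  using S finite_subset by blast

lemma set_enum_image_k: "set_enum S ` {0..<k} = S"
  using set_enum_image[OF finite_S] S(2) by simp

lemma length_Jprime: "length (Jprime J L S) = length J"
  unfolding Jprime_eq using length_fold_list_update[where p=id] by simp

lemma nth_Jprime: "i < length J \<Longrightarrow> Jprime J L S ! i = (if i < k then L ! set_enum S i else J ! i)"
  unfolding Jprime_eq using S kJ
    nth_fold_list_update[where p=id and xs=J and t=i and k=k]
    nth_fold_list_update_other[where p=id and xs=J and i=i and k=k]
  by simp

lemma length_Lprime: "length (Lprime J L S) = length L"
  unfolding Lprime_eq by (rule length_fold_list_update)

lemma nth_Lprime_enum: "t < k \<Longrightarrow> Lprime J L S ! set_enum S t = J ! t"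
  unfolding Lprime_eq S(2)
proof (rule nth_fold_list_update)
  show "inj_on (set_enum S) {0..<k}" using inj_on_set_enum S(2) by metis
  have "set_enum S t \<in> S" if "t < k" for t
    using that by (metis atLeastLessThan_iff imageI le0 set_enum_image_k)
  then show "\<forall>t<k. set_enum S t < length L" using S(1) by fastforce
qed

lemma nth_Lprime_other: "i \<notin> S \<Longrightarrow> Lprime J L S ! i = L ! i"
  unfolding Lprime_eq by (rule nth_fold_list_update_other) (simp add: set_enum_image[OF finite_S])

lemma set_Jprime: "set (Jprime J L S) = nth L ` S \<union> nth J ` {k..<length J}"
proof -
  have "set (Jprime J L S) = nth (Jprime J L S) ` ({0..<k} \<union> {k..<length J})"
    using nth_image[of "length J" "Jprime J L S"] kJ length_Jprime by (simp add: ivl_disj_un)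
  also have "\<dots> = (\<lambda>t. L ! set_enum S t) ` {0..<k} \<union> nth J ` {k..<length J}"
    unfolding image_Un using kJ
    by (intro arg_cong2[where f="(\<union>)"] image_cong) (auto simp: nth_Jprime)
  finally show ?thesis using set_enum_image_k by (simp add: image_image[symmetric])
qed

lemma set_Lprime: "set (Lprime J L S) = nth J ` {0..<k} \<union> nth L ` ({0..<length L} - S)"
proof -
  have "set (Lprime J L S) = nth (Lprime J L S) ` (set_enum S ` {0..<k} \<union> ({0..<length L} - S))"
    using nth_image[of "length L" "Lprime J L S"] length_Lprime set_enum_image_k S(1)
    by (simp add: Un_absorb1)
  also have "\<dots> = nth J ` {0..<k} \<union> nth L ` ({0..<length L} - S)"
    unfolding image_Un image_image
    by (intro arg_cong2[where f="(\<union>)"] image_cong) (auto simp: nth_Lprime_enum nth_Lprime_other)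
  finally show ?thesis .
qed

end

section \<open>Sign of an exchange\<close>

definition ordered_pairs :: "nat set \<Rightarrow> (nat \<times> nat) set" where
  "ordered_pairs I = {(i, j). i \<in> I \<and> j \<in> I \<and> i < j}"

definition inversion_sign :: "(nat \<Rightarrow> nat) \<Rightarrow> nat set \<Rightarrow> int" where
  "inversion_sign f I = (\<Prod>p\<in>ordered_pairs I. if f (snd p) < f (fst p) then -1 else 1)"

definition cross_sign :: "nat set \<Rightarrow> nat set \<Rightarrow> int" where
  "cross_sign X Y = (\<Prod>x\<in>X. \<Prod>y\<in>Y. if y < x then -1 else 1)"

lemma finite_ordered_pairs: "finite I \<Longrightarrow> finite (ordered_pairs I)"
  unfolding ordered_pairs_def by (rule finite_subset[of _ "I \<times> I"]) auto

lemma prod_sign_eq_power: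
  "finite A \<Longrightarrow> (\<Prod>p\<in>A. if P p then -1 else 1 :: int) = (-1) ^ card {p\<in>A. P p}"
proof (induction A rule: finite_induct)
  case (insert x A)
  have "{p \<in> insert x A. P p} = (if P x then insert x {p\<in>A. P p} else {p\<in>A. P p})" by auto
  then show ?case using insert by auto
qed simp

lemma seq_sign_eq_inversion_sign: "seq_sign xs = inversion_sign (nth xs) {0..<length xs}"
proof -
  have "{(i, j). i < j \<and> j < length xs \<and> xs ! j < xs ! i}
      = {p \<in> ordered_pairs {0..<length xs}. xs ! snd p < xs ! fst p}"
    unfolding ordered_pairs_def by auto
  then show ?thesis
    unfolding seq_sign_def inversion_sign_def
    using prod_sign_eq_power[OF finite_ordered_pairs[of "{0..<length xs}"]] by simp
qed

lemma inversion_sign_cong: "(\<And>i. i \<in> I \<Longrightarrow> f i = g i) \<Longrightarrow> inversion_sign f I = inversion_sign g I"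
  unfolding inversion_sign_def ordered_pairs_def by (rule prod.cong) auto

lemma inversion_sign_reindex:
  assumes mono: "\<And>a b. a < b \<Longrightarrow> b < k \<Longrightarrow> r a < r b"
  shows "inversion_sign f (r ` {0..<k}) = inversion_sign (f \<circ> r) {0..<k}"
proof -
  have r_less_iff: "r a < r b \<longleftrightarrow> a < b" if "a < k" "b < k" for a b
    using mono[of a b] mono[of b a] that by (cases a b rule: linorder_cases) auto
  have pairs: "ordered_pairs (r ` {0..<k}) = map_prod r r ` ordered_pairs {0..<k}"
    unfolding ordered_pairs_def using r_less_iff by auto
  have "a = b" if "r a = r b" "a < k" "b < k" for a b
    using r_less_iff[OF that(2,3)] r_less_iff[OF that(3,2)] that(1) by auto
  then have "inj_on (map_prod r r) (ordered_pairs {0..<k})"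
    unfolding ordered_pairs_def inj_on_def by auto
  then show ?thesis unfolding inversion_sign_def pairs by (simp add: prod.reindex)
qed

lemma prod_sign_mult_self: "finite A \<Longrightarrow> (\<forall>a\<in>A. g a * g a = (1::int)) \<Longrightarrow> prod g A * prod g A = 1"
  by (induction A rule: finite_induct) (auto simp: algebra_simps)

lemma cross_sign_mult_self: "finite X \<Longrightarrow> finite Y \<Longrightarrow> cross_sign X Y * cross_sign X Y = 1"
  unfolding cross_sign_def by (intro prod_sign_mult_self) (auto intro: prod_sign_mult_self)

lemma ordered_pairs_Un:
  assumes disj: "S \<inter> S' = {}"
  defines "M \<equiv> (\<lambda>(x, y). (min x y, max x y)) ` (S \<times> S')"
  shows "ordered_pairs (S \<union> S') = (ordered_pairs S \<union> ordered_pairs S') \<union> M"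
    and "(ordered_pairs S \<union> ordered_pairs S') \<inter> M = {}" "ordered_pairs S \<inter> ordered_pairs S' = {}"
proof (intro equalityI subsetI)
  fix p assume "p \<in> ordered_pairs (S \<union> S')"
  then obtain i j where p: "p = (i, j)" "i \<in> S \<union> S'" "j \<in> S \<union> S'" "i < j"
    unfolding ordered_pairs_def by auto
  then have "p = (\<lambda>(x, y). (min x y, max x y)) (i, j)" "p = (\<lambda>(x, y). (min x y, max x y)) (j, i)"
    by auto
  then show "p \<in> (ordered_pairs S \<union> ordered_pairs S') \<union> M"
    using p unfolding ordered_pairs_def M_def by (fastforce intro: rev_image_eqI)
next
  fix p assume "p \<in> (ordered_pairs S \<union> ordered_pairs S') \<union> M"
  then show "p \<in> ordered_pairs (S \<union> S')"
    using disj unfolding ordered_pairs_def M_def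
    by (auto simp: min_def max_def) (metis IntI empty_iff le_neq_implies_less)+
next
  show "(ordered_pairs S \<union> ordered_pairs S') \<inter> M = {}" "ordered_pairs S \<inter> ordered_pairs S' = {}"
    using disj unfolding ordered_pairs_def M_def by (auto simp: min_def max_def split: if_splits)
qed

lemma inversion_sign_Un:
  assumes fin: "finite S" "finite S'" and disj: "S \<inter> S' = {}" and inj: "inj_on f (S \<union> S')"
  shows "inversion_sign f (S \<union> S')
    = inversion_sign f S * inversion_sign f S' * cross_sign (f ` S) (f ` S') * cross_sign S S'"
proof -
  define h where "h = (\<lambda>p. if f (snd p) < f (fst p) then -1 else (1::int))"
  define sorted_pair where "sorted_pair = (\<lambda>(x, y). (min x y, max x y :: nat))"
  define M where "M = sorted_pair ` (S \<times> S')"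
  have fins: "finite (ordered_pairs S)" "finite (ordered_pairs S')" "finite M"
    using finite_ordered_pairs fin by (auto simp: M_def)
  have "ordered_pairs (S \<union> S') = (ordered_pairs S \<union> ordered_pairs S') \<union> M"
    "(ordered_pairs S \<union> ordered_pairs S') \<inter> M = {}" "ordered_pairs S \<inter> ordered_pairs S' = {}"
    using ordered_pairs_Un[OF disj] unfolding M_def sorted_pair_def by auto
  then have split: "inversion_sign f (S \<union> S')
      = inversion_sign f S * inversion_sign f S' * prod h M"
    unfolding inversion_sign_def h_def[symmetric] using fins by (simp add: prod.union_disjoint)
  have "inj_on sorted_pair (S \<times> S')"
    using disj unfolding inj_on_def sorted_pair_def by (auto simp: min_def max_def split: if_splits)
  then have "prod h M = (\<Prod>p\<in>S \<times> S'. h (sorted_pair p))"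
    unfolding M_def by (simp add: prod.reindex)
  also have "\<dots> = (\<Prod>(x, y)\<in>S \<times> S'. (if f y < f x then -1 else 1) * (if y < x then -1 else 1))"
  proof (rule prod.cong)
    fix p assume "p \<in> S \<times> S'"
    then obtain x y where p: "p = (x, y)" "x \<in> S" "y \<in> S'" by auto
    then have "x \<noteq> y" "f x \<noteq> f y" using disj inj unfolding inj_on_def by auto
    then show "h (sorted_pair p) = (case p of (x, y) \<Rightarrow>
        (if f y < f x then -1 else 1) * (if y < x then -1 else 1))"
      using p by (auto simp: h_def sorted_pair_def min_def max_def)
  qed simp
  also have "\<dots> = cross_sign (f ` S) (f ` S') * cross_sign S S'"
  proof -
    have "inj_on f S" "inj_on f S'" using inj by (auto simp: inj_on_def)
    then show ?thesis
      unfolding cross_sign_def prod.cartesian_product[symmetric]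
      by (simp add: prod.reindex case_prod_unfold prod.distrib)
  qed
  finally show ?thesis using split by (simp add: algebra_simps)
qed

lemma seq_sign_split:
  assumes "distinct xs" "{0..<length xs} = A \<union> B" "A \<inter> B = {}"
  shows "seq_sign xs = inversion_sign (nth xs) A * inversion_sign (nth xs) B
    * cross_sign (nth xs ` A) (nth xs ` B) * cross_sign A B"
proof -
  have fin: "finite A" "finite B"
    using assms(2) finite_Un[of A B] by (metis finite_atLeastLessThan)+
  have "inj_on (nth xs) (A \<union> B)"
    using assms(1,2) inj_on_nth[of xs "A \<union> B"] by (metis atLeastLessThan_iff)
  then show ?thesis
    unfolding seq_sign_eq_inversion_sign assms(2) using inversion_sign_Un[OF fin assms(3)] by blast
qed

context
  fixes J L :: "nat list" and S :: "nat set" and k :: nat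
  assumes S: "S \<subseteq> {0..<length L}" "card S = k" and kJ: "k \<le> length J"
    and distinct: "distinct J" "distinct L" "distinct (Jprime J L S)" "distinct (Lprime J L S)"
begin

lemma seq_sign_Jprime:
  "seq_sign (Jprime J L S) = inversion_sign (nth L \<circ> set_enum S) {0..<k}
    * inversion_sign (nth J) {k..<length J} * cross_sign (nth L ` S) (nth J ` {k..<length J})
    * cross_sign {0..<k} {k..<length J}"
proof -
  have "seq_sign (Jprime J L S) = inversion_sign (nth (Jprime J L S)) {0..<k}
      * inversion_sign (nth (Jprime J L S)) {k..<length J}
      * cross_sign (nth (Jprime J L S) ` {0..<k}) (nth (Jprime J L S) ` {k..<length J})
      * cross_sign {0..<k} {k..<length J}"
    using kJ by (intro seq_sign_split) (auto simp: length_Jprime[OF S kJ] distinct(3))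
  moreover have "nth (Jprime J L S) ` {0..<k} = nth L ` (set_enum S ` {0..<k})"
    unfolding image_image using kJ by (intro image_cong) (auto simp: nth_Jprime[OF S kJ])
  then have "nth (Jprime J L S) ` {0..<k} = nth L ` S" using set_enum_image_k[OF S kJ] by simp
  moreover have "nth (Jprime J L S) ` {k..<length J} = nth J ` {k..<length J}"
    by (rule image_cong) (auto simp: nth_Jprime[OF S kJ])
  moreover have
    "inversion_sign (nth (Jprime J L S)) {0..<k} = inversion_sign (nth L \<circ> set_enum S) {0..<k}"
    "inversion_sign (nth (Jprime J L S)) {k..<length J} = inversion_sign (nth J) {k..<length J}"
    using kJ by (auto intro!: inversion_sign_cong simp: nth_Jprime[OF S kJ])
  ultimately show ?thesis by simp
qed

lemma seq_sign_L_split: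
  "seq_sign L = inversion_sign (nth L \<circ> set_enum S) {0..<k}
    * inversion_sign (nth L) ({0..<length L} - S)
    * cross_sign (nth L ` S) (nth L ` ({0..<length L} - S)) * cross_sign S ({0..<length L} - S)"
proof -
  have "seq_sign L = inversion_sign (nth L) S * inversion_sign (nth L) ({0..<length L} - S)
      * cross_sign (nth L ` S) (nth L ` ({0..<length L} - S)) * cross_sign S ({0..<length L} - S)"
    using S by (intro seq_sign_split) (auto simp: distinct(2))
  moreover have "inversion_sign (nth L) S = inversion_sign (nth L \<circ> set_enum S) {0..<k}"
    using inversion_sign_reindex[of k "set_enum S" "nth L"] set_enum_image_k[OF S kJ]
      set_enum_strict_mono[OF finite_S[OF S kJ]] S(2) by simp
  ultimately show ?thesis by simp
qed

lemma seq_sign_Lprime: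
  "seq_sign (Lprime J L S) = inversion_sign (nth J) {0..<k}
    * inversion_sign (nth L) ({0..<length L} - S)
    * cross_sign (nth J ` {0..<k}) (nth L ` ({0..<length L} - S))
    * cross_sign S ({0..<length L} - S)"
proof -
  let ?L' = "Lprime J L S"
  have "seq_sign ?L' = inversion_sign (nth ?L') S * inversion_sign (nth ?L') ({0..<length L} - S)
      * cross_sign (nth ?L' ` S) (nth ?L' ` ({0..<length L} - S))
      * cross_sign S ({0..<length L} - S)"
    using S by (intro seq_sign_split) (auto simp: length_Lprime[OF S kJ] distinct(4))
  moreover have "inversion_sign (nth ?L') S = inversion_sign (nth J) {0..<k}"
    using inversion_sign_reindex[of k "set_enum S" "nth ?L'"] set_enum_image_k[OF S kJ]
      set_enum_strict_mono[OF finite_S[OF S kJ]] S(2)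
    by (auto intro!: inversion_sign_cong simp: nth_Lprime_enum[OF S kJ])
  moreover have "nth ?L' ` (set_enum S ` {0..<k}) = nth J ` {0..<k}"
    unfolding image_image by (intro image_cong) (auto simp: nth_Lprime_enum[OF S kJ])
  then have "nth ?L' ` S = nth J ` {0..<k}" using set_enum_image_k[OF S kJ] by simp
  moreover have "nth ?L' ` ({0..<length L} - S) = nth L ` ({0..<length L} - S)"
    "inversion_sign (nth ?L') ({0..<length L} - S) = inversion_sign (nth L) ({0..<length L} - S)"
    by (auto intro!: image_cong inversion_sign_cong simp: nth_Lprime_other[OF S kJ])
  ultimately show ?thesis by simp
qed

text \<open>Split each of J, L, J', L' into its exchanged and its kept block: the inversion signs
  inside blocks match up, and under either hypothesis so do the cross signs between blocks.\<close>

lemma seq_sign_exchange: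
  assumes "nth L ` S = nth J ` {0..<k} \<or> nth L ` ({0..<length L} - S) = nth J ` {k..<length J}"
  shows "seq_sign (Jprime J L S) * seq_sign (Lprime J L S) = seq_sign J * seq_sign L"
proof -
  define P Q X R where "P = nth J ` {0..<k}" and "Q = nth J ` {k..<length J}"
    and "X = nth L ` S" and "R = nth L ` ({0..<length L} - S)"
  have fin: "finite P" "finite Q" "finite X" "finite R"
    unfolding P_def Q_def X_def R_def using finite_S[OF S kJ] by auto
  have "seq_sign J = inversion_sign (nth J) {0..<k} * inversion_sign (nth J) {k..<length J}
      * cross_sign P Q * cross_sign {0..<k} {k..<length J}"
    unfolding P_def Q_def using kJ by (intro seq_sign_split) (auto simp: distinct(1))
  then have identity:
      "seq_sign (Jprime J L S) * seq_sign (Lprime J L S) * (cross_sign P Q * cross_sign X R)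
      = seq_sign J * seq_sign L * (cross_sign X Q * cross_sign P R)"
    unfolding seq_sign_Jprime seq_sign_L_split seq_sign_Lprime P_def Q_def X_def R_def
    by (simp add: algebra_simps)
  have "cross_sign P Q * cross_sign X R = cross_sign X Q * cross_sign P R"
    using assms unfolding P_def Q_def X_def R_def[symmetric] by (auto simp: mult.commute)
  moreover have "(cross_sign P Q * cross_sign X R) * (cross_sign P Q * cross_sign X R) = 1"
    using cross_sign_mult_self[OF fin(1,2)] cross_sign_mult_self[OF fin(3,4)]
    by (simp add: algebra_simps)
  ultimately show ?thesis using identity by (metis mult.assoc mult.right_neutral)
qed

end

section \<open>Terms of a Pluecker relation\<close>

definition prefix_set :: "nat list \<Rightarrow> nat \<Rightarrow> nat set" where
  "prefix_set J k = nth J ` {0..<k}"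

definition suffix_set :: "nat list \<Rightarrow> nat \<Rightarrow> nat set" where
  "suffix_set J k = nth J ` {k..<length J}"

definition index_subsets :: "nat list \<Rightarrow> nat \<Rightarrow> nat set set" where
  "index_subsets L k = {S. S \<subseteq> {0..<length L} \<and> card S = k}"

lemma finite_index_subsets: "finite (index_subsets L k)"
  unfolding index_subsets_def by (rule finite_subset[of _ "Pow {0..<length L}"]) auto

lemma pprod_nonzero_iff: "pprod xs ys m \<noteq> 0 \<longleftrightarrow> distinct xs \<and> distinct ys \<and> m = {#set xs, set ys#}"
  unfolding pprod_def seq_sign_def by auto

lemma plucker_apply:
  "plucker J L k m = pprod J L m - (\<Sum>S\<in>index_subsets L k. pprod (Jprime J L S) (Lprime J L S) m)"
  unfolding plucker_def index_subsets_def by simp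

lemma add_mset_pair_eq_iff: "{#a, b#} = {#c, d#} \<longleftrightarrow> (a = c \<and> b = d) \<or> (a = d \<and> b = c)"
  by (auto simp: add_eq_conv_ex)

context
  fixes J :: "nat list" and k :: nat
  assumes dJ: "distinct J" and kJ: "k \<le> length J"
begin

lemma prefix_suffix_disjoint: "prefix_set J k \<inter> suffix_set J k = {}"
  using dJ kJ by (auto simp: prefix_set_def suffix_set_def nth_eq_iff_index_eq)

lemma prefix_Un_suffix: "prefix_set J k \<union> suffix_set J k = set J"
  unfolding prefix_set_def suffix_set_def image_Un[symmetric] using kJ nth_image[of "length J" J]
  by (simp add: ivl_disj_un)

lemma card_prefix_set: "card (prefix_set J k) = k"
  unfolding prefix_set_def using dJ kJ by (subst card_image) (auto intro: inj_on_nth)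

lemma card_suffix_set: "card (suffix_set J k) = length J - k"
  unfolding suffix_set_def using dJ by (subst card_image) (auto intro: inj_on_nth)

end

context
  fixes L :: "nat list" and S :: "nat set" and k :: nat
  assumes dL: "distinct L" and S: "S \<in> index_subsets L k"
begin

lemma card_image_index_subset: "card (nth L ` S) = k"
  using dL S unfolding index_subsets_def by (subst card_image) (auto intro!: inj_on_nth)

lemma image_index_subset: "nth L ` S \<subseteq> set L"
  using S unfolding index_subsets_def by auto

lemma image_index_complement: "nth L ` ({0..<length L} - S) = set L - nth L ` S"
  using S inj_on_image_set_diff[OF inj_on_nth[OF dL, of "{0..<length L}"]]
    nth_image[of "length L" L]
  unfolding index_subsets_def by simp

end

context
  fixes J L :: "nat list" and k :: nat
  assumes dJ: "distinct J" and dL: "distinct L" and kJ: "k \<le> length J"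
begin

lemma index_subsetD: "S \<in> index_subsets L k \<Longrightarrow> S \<subseteq> {0..<length L} \<and> card S = k"
  unfolding index_subsets_def by simp

lemma set_Jprime_eq:
  "S \<in> index_subsets L k \<Longrightarrow> set (Jprime J L S) = nth L ` S \<union> suffix_set J k"
  using set_Jprime[of S L k J] kJ unfolding suffix_set_def index_subsets_def by simp

lemma set_Lprime_eq:
  "S \<in> index_subsets L k \<Longrightarrow> set (Lprime J L S) = prefix_set J k \<union> (set L - nth L ` S)"
  using set_Lprime[of S L k J] kJ image_index_complement[OF dL, of S k]
  unfolding prefix_set_def index_subsets_def by simp

lemma distinct_exchange_iff:
  assumes S: "S \<in> index_subsets L k"
  shows "distinct (Jprime J L S) \<and> distinct (Lprime J L S)
    \<longleftrightarrow> nth L ` S \<inter> suffix_set J k = {} \<and> prefix_set J k \<inter> set L \<subseteq> nth L ` S"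
proof -
  have S': "S \<subseteq> {0..<length L}" "card S = k" using index_subsetD[OF S] by auto
  have fin: "finite (nth L ` S)" "finite (prefix_set J k)" "finite (suffix_set J k)"
    using S' finite_subset by (auto simp: prefix_set_def suffix_set_def)
  have "k \<le> length L" using S' card_mono[of "{0..<length L}" S] by simp
  then have card_rest: "card (set L - nth L ` S) = length L - k"
    using card_Diff_subset[OF fin(1) image_index_subset[OF dL S]]
    by (simp add: card_image_index_subset[OF dL S] distinct_card[OF dL])
  have "distinct (Jprime J L S) \<longleftrightarrow> card (nth L ` S \<union> suffix_set J k) = length J"
    using set_Jprime_eq[OF S] length_Jprime[OF S' kJ] card_distinct distinct_card by metis
  also have "\<dots> \<longleftrightarrow> nth L ` S \<inter> suffix_set J k = {}"
    using card_Un_Int[OF fin(1,3)] card_image_index_subset[OF dL S] card_suffix_set[OF dJ kJ] kJ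
    by (auto simp: card_eq_0_iff fin)
  finally have J': "distinct (Jprime J L S) \<longleftrightarrow> nth L ` S \<inter> suffix_set J k = {}" .
  have "distinct (Lprime J L S) \<longleftrightarrow> card (prefix_set J k \<union> (set L - nth L ` S)) = length L"
    using set_Lprime_eq[OF S] length_Lprime[OF S' kJ] card_distinct distinct_card by metis
  also have "\<dots> \<longleftrightarrow> prefix_set J k \<inter> (set L - nth L ` S) = {}"
    using card_Un_Int[OF fin(2), of "set L - nth L ` S"] card_rest card_prefix_set[OF dJ kJ]
      \<open>k \<le> length L\<close> by (auto simp: card_eq_0_iff fin)
  finally show ?thesis using J' by auto
qed

lemma index_subsetE:
  assumes "W \<subseteq> set L" "card W = k"
  obtains S where "S \<in> index_subsets L k" "nth L ` S = W"
proof
  let ?S = "{i\<in>{0..<length L}. L ! i \<in> W}"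
  show img: "nth L ` ?S = W"
  proof
    show "W \<subseteq> nth L ` ?S"
    proof
      fix w assume "w \<in> W"
      then have "w \<in> set L" using assms(1) by blast
      then obtain i where "i < length L" "L ! i = w" by (auto simp: in_set_conv_nth)
      then show "w \<in> nth L ` ?S" using \<open>w \<in> W\<close> by force
    qed
  qed auto
  have "inj_on (nth L) ?S" using dL by (auto intro!: inj_on_nth)
  then have "card ?S = k" using card_image img assms(2) by metis
  then show "?S \<in> index_subsets L k" unfolding index_subsets_def by auto
qed

lemma index_subsets_image_inj:
  assumes "S \<in> index_subsets L k" "S' \<in> index_subsets L k" "nth L ` S = nth L ` S'"
  shows "S = S'"
  using assms inj_on_image_eq_iff[OF inj_on_nth[OF dL, of "{0..<length L}"]]
  unfolding index_subsets_def by auto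

lemma plucker_eq_0_if_single_exchange:
  assumes S0: "S0 \<in> index_subsets L k"
    and unique: "\<And>S. S \<in> index_subsets L k \<Longrightarrow>
      distinct (Jprime J L S) \<and> distinct (Lprime J L S) \<longleftrightarrow> S = S0"
    and sets: "{#set (Jprime J L S0), set (Lprime J L S0)#} = {#set J, set L#}"
    and swap: "nth L ` S0 = prefix_set J k \<or> nth L ` ({0..<length L} - S0) = suffix_set J k"
  shows "plucker J L k m = 0"
proof -
  have S0': "S0 \<subseteq> {0..<length L}" "card S0 = k" using index_subsetD[OF S0] by auto
  have d0: "distinct (Jprime J L S0)" "distinct (Lprime J L S0)" using unique[OF S0] by auto
  have "(\<Sum>S\<in>index_subsets L k. pprod (Jprime J L S) (Lprime J L S) m)
      = pprod (Jprime J L S0) (Lprime J L S0) m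
        + (\<Sum>S\<in>index_subsets L k - {S0}. pprod (Jprime J L S) (Lprime J L S) m)"
    by (rule sum.remove[OF finite_index_subsets S0])
  also have "(\<Sum>S\<in>index_subsets L k - {S0}. pprod (Jprime J L S) (Lprime J L S) m) = 0"
    using unique by (intro sum.neutral) (auto simp: pprod_def)
  also have "pprod (Jprime J L S0) (Lprime J L S0) m = pprod J L m"
    using seq_sign_exchange[OF S0' kJ dJ dL d0] swap sets d0 dJ dL
    unfolding pprod_def prefix_set_def suffix_set_def by simp
  finally show ?thesis by (simp add: plucker_apply)
qed

lemma plucker_eq_0_if_prefix_subset:
  assumes P: "prefix_set J k \<subseteq> set L"
  shows "plucker J L k m = 0"
proof -
  obtain S0 where S0: "S0 \<in> index_subsets L k" "nth L ` S0 = prefix_set J k"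
    using index_subsetE[OF P card_prefix_set[OF dJ kJ]] .
  have unique: "distinct (Jprime J L S) \<and> distinct (Lprime J L S) \<longleftrightarrow> S = S0"
    if S: "S \<in> index_subsets L k" for S
  proof -
    have fin: "finite (nth L ` S)"
      using index_subsetD[OF S] by (meson finite_atLeastLessThan finite_imageI finite_subset)
    have "distinct (Jprime J L S) \<and> distinct (Lprime J L S)
        \<longleftrightarrow> nth L ` S \<inter> suffix_set J k = {} \<and> prefix_set J k \<subseteq> nth L ` S"
      using distinct_exchange_iff[OF S] P by (simp add: Int_absorb2)
    also have "\<dots> \<longleftrightarrow> prefix_set J k = nth L ` S"
      using card_seteq[OF fin, of "prefix_set J k"] card_image_index_subset[OF dL S]
        card_prefix_set[OF dJ kJ] prefix_suffix_disjoint[OF dJ kJ] by auto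
    also have "\<dots> \<longleftrightarrow> S = S0"
      using index_subsets_image_inj[OF S S0(1)] S0(2) by auto
    finally show ?thesis .
  qed
  have sets: "{#set (Jprime J L S0), set (Lprime J L S0)#} = {#set J, set L#}"
    using set_Jprime_eq[OF S0(1)] set_Lprime_eq[OF S0(1)] S0(2) P prefix_Un_suffix[OF dJ kJ]
    by (simp add: Un_Diff_cancel Un_absorb1)
  show ?thesis using plucker_eq_0_if_single_exchange[OF S0(1) unique sets] S0(2) by simp
qed

lemma plucker_eq_0_if_suffix_subset:
  assumes eq: "length J = length L" and Q: "suffix_set J k \<subseteq> set L"
  shows "plucker J L k m = 0"
proof -
  define W where "W = set L - suffix_set J k"
  have cardW: "card W = k"
    using card_Diff_subset[OF _ Q] card_suffix_set[OF dJ kJ] distinct_card[OF dL] eq kJ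
    by (simp add: W_def suffix_set_def)
  then obtain S0 where S0: "S0 \<in> index_subsets L k" "nth L ` S0 = W"
    using index_subsetE[of W] W_def by blast
  have unique: "distinct (Jprime J L S) \<and> distinct (Lprime J L S) \<longleftrightarrow> S = S0"
    if S: "S \<in> index_subsets L k" for S
  proof -
    have "nth L ` S \<inter> suffix_set J k = {} \<longleftrightarrow> nth L ` S \<subseteq> W"
      using image_index_subset[OF dL S] unfolding W_def by blast
    also have "\<dots> \<longleftrightarrow> nth L ` S = W"
      using card_seteq[of W "nth L ` S"] card_image_index_subset[OF dL S] cardW
      unfolding W_def by auto
    finally have "nth L ` S \<inter> suffix_set J k = {} \<longleftrightarrow> nth L ` S = W" .
    moreover have "prefix_set J k \<inter> set L \<subseteq> W"
      using prefix_suffix_disjoint[OF dJ kJ] unfolding W_def by blast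
    ultimately have "distinct (Jprime J L S) \<and> distinct (Lprime J L S) \<longleftrightarrow> nth L ` S = W"
      using distinct_exchange_iff[OF S] by auto
    also have "\<dots> \<longleftrightarrow> S = S0"
      using index_subsets_image_inj[OF S S0(1)] S0(2) by auto
    finally show ?thesis .
  qed
  have "set (Jprime J L S0) = set L" "set (Lprime J L S0) = set J"
    using set_Jprime_eq[OF S0(1)] set_Lprime_eq[OF S0(1)] S0(2) Q prefix_Un_suffix[OF dJ kJ]
      image_index_subset[OF dL S0(1)] unfolding W_def by auto
  then have sets: "{#set (Jprime J L S0), set (Lprime J L S0)#} = {#set J, set L#}"
    by (simp add: add_mset_commute)
  have "nth L ` ({0..<length L} - S0) = suffix_set J k"
    using image_index_complement[OF dL S0(1)] S0(2) Q unfolding W_def by auto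
  then show ?thesis using plucker_eq_0_if_single_exchange[OF S0(1) unique sets] by simp
qed

lemma plucker_support:
  assumes "plucker J L k m \<noteq> 0"
  obtains A B where "m = {#A, B#}" "card A = length J" "card B = length L"
    "A \<inter> B = set J \<inter> set L" "A \<union> B = set J \<union> set L"
proof (cases "pprod J L m = 0")
  case False
  then show ?thesis
    using that distinct_card[OF dJ] distinct_card[OF dL] by (auto simp: pprod_nonzero_iff)
next
  case True
  then obtain S where S: "S \<in> index_subsets L k" "pprod (Jprime J L S) (Lprime J L S) m \<noteq> 0"
    using assms sum.not_neutral_contains_not_neutral by (force simp: plucker_apply)
  then have d: "distinct (Jprime J L S)" "distinct (Lprime J L S)"
    and m: "m = {#set (Jprime J L S), set (Lprime J L S)#}" by (auto simp: pprod_nonzero_iff)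
  have "card (set (Jprime J L S)) = length J" "card (set (Lprime J L S)) = length L"
    using d distinct_card index_subsetD[OF S(1)] length_Jprime length_Lprime kJ by metis+
  moreover have "nth L ` S \<inter> suffix_set J k = {}" "prefix_set J k \<inter> set L \<subseteq> nth L ` S"
    using distinct_exchange_iff[OF S(1)] d by auto
  then have "set (Jprime J L S) \<inter> set (Lprime J L S) = set J \<inter> set L"
    "set (Jprime J L S) \<union> set (Lprime J L S) = set J \<union> set L"
    unfolding set_Jprime_eq[OF S(1)] set_Lprime_eq[OF S(1)]
    using image_index_subset[OF dL S(1)] prefix_suffix_disjoint[OF dJ kJ] prefix_Un_suffix[OF dJ kJ]
    by blast+
  ultimately show ?thesis using that m by blast
qed

end

section \<open>Minimal admissible exchanges\<close>

lemma card_above_eq: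
  assumes "finite I" "I \<subseteq> {1..}" "{1..<c} \<subseteq> I"
  shows "card {a\<in>I. c \<le> a} = card I - (c - 1)"
proof -
  have "I = {1..<c} \<union> {a\<in>I. c \<le> a}" using assms by auto
  then have "card I = card {1..<c} + card {a\<in>I. c \<le> a}"
    using assms(1) by (metis (no_types, lifting) card_Un_disjoint disjoint_iff finite_Un
      atLeastLessThan_iff mem_Collect_eq not_le)
  then show ?thesis by simp
qed

lemma le_cox_image_initial: "le_cox_image T m I \<Longrightarrow> {1..<m-1} \<subseteq> I"
proof -
  assume "le_cox_image T m I"
  moreover have "{1..<m-1} \<subseteq> {1..<m}" by auto
  ultimately show ?thesis unfolding le_cox_image_def by blast
qed

lemma le_cox_image_insert_large:
  assumes "m < z \<or> (z = m \<and> m \<notin> T)"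
  shows "le_cox_image T m (insert z I) \<longleftrightarrow> le_cox_image T m I"
  using assms unfolding le_cox_image_def by auto

context
  fixes T :: "nat set" and m :: nat and A :: "nat set"
  assumes le: "le_cox_image T m A" and A: "finite A" "A \<subseteq> {1..}" "card A = m"
begin

lemma le_cox_image_large_unique:
  assumes "a \<in> A" "b \<in> A" "m < a \<or> (a = m \<and> m \<notin> T)" "m < b \<or> (b = m \<and> m \<notin> T)"
  shows "a = b"
proof (cases "m \<in> T")
  case False
  then have "{1..<m} \<subseteq> A" using le unfolding le_cox_image_def by auto
  then have "card {x\<in>A. m \<le> x} \<le> 1" using card_above_eq[OF A(1,2)] A(3) by simp
  then show ?thesis using assms A(1) card_le_Suc0_iff_eq[of "{x\<in>A. m \<le> x}"] by auto
next
  case True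
  then obtain u where u: "u \<in> A" "u \<in> {m-1, m}" and init: "{1..<m-1} \<subseteq> A"
    using le unfolding le_cox_image_def by auto
  have "insert u {1..<m-1} \<subseteq> {x\<in>A. x \<le> m}" using u init by auto
  then have "card (insert u {1..<m-1}) \<le> card {x\<in>A. x \<le> m}" using A(1) by (intro card_mono) auto
  moreover have "u \<notin> {1..<m-1}" using u by auto
  moreover have "A = {x\<in>A. x \<le> m} \<union> {x\<in>A. m < x}" by auto
  then have "card A = card {x\<in>A. x \<le> m} + card {x\<in>A. m < x}"
    using A(1) by (metis (no_types, lifting) card_Un_disjoint disjoint_iff finite_Un
      mem_Collect_eq not_le)
  ultimately have "card {x\<in>A. m < x} \<le> 1" using A(3) by simp
  then show ?thesis using assms True A(1) card_le_Suc0_iff_eq[of "{x\<in>A. m < x}"] by auto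
qed

end

lemma le_cox_image_common_element:
  assumes T: "\<forall>a\<in>T. a + 1 \<notin> T" and A: "le_cox_image T e A" and B: "le_cox_image T d B"
    and ed: "2 \<le> e" "e < d"
  shows "e - 1 \<in> A \<inter> B \<or> e \<in> A \<inter> B"
proof -
  have B0: "{1..<d-1} \<subseteq> B" using le_cox_image_initial[OF B] .
  moreover have "e - 1 \<in> {1..<d-1}" using ed by auto
  ultimately have "e - 1 \<in> B" by blast
  show ?thesis
  proof (cases "e - 1 \<in> A")
    case False
    moreover have "e - 1 \<in> {1..<e}" using ed by auto
    ultimately have eT: "e \<in> T" "e \<in> A" using A unfolding le_cox_image_def by blast+
    have "e \<in> B"
    proof (cases "e < d - 1")
      case True
      then show ?thesis using B0 ed by auto
    next
      case False
      then have "d = e + 1" using ed by simp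
      then show ?thesis using B T eT(1) ed unfolding le_cox_image_def by auto
    qed
    then show ?thesis using eT(2) by auto
  qed (use \<open>e - 1 \<in> B\<close> in auto)
qed

definition exchange_weight :: "nat \<Rightarrow> nat set \<Rightarrow> nat set \<Rightarrow> nat \<Rightarrow> nat" where
  "exchange_weight n A0 V z = wt n (insert z A0) + wt n (V - {z})"

lemma exchange_weight_eq:
  assumes fin: "finite A0" "finite V" and z: "z \<in> V" "z \<notin> A0" "z \<le> n"
    and card: "card A0 = e - 1" "card V = d + 1" and ed: "1 \<le> e" "e \<le> d" "d \<le> n - 1"
  shows "exchange_weight n A0 V z = card {a\<in>A0. e \<le> a \<and> a \<le> n - 1}
    + card {a\<in>V. d \<le> a \<and> a \<le> n - 1} + (if e \<le> z \<and> z < d then 1 else 0)"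
proof -
  have "card (insert z A0) = e" "card (V - {z}) = d" using card z fin ed by simp_all
  moreover have "{a \<in> insert z A0. e \<le> a \<and> a \<le> n - 1}
      = (if e \<le> z \<and> z \<le> n - 1 then insert z else id) {a\<in>A0. e \<le> a \<and> a \<le> n - 1}"
    by auto
  moreover have "{a\<in>V. d \<le> a \<and> a \<le> n - 1}
      = (if d \<le> z \<and> z \<le> n - 1 then insert z else id) {a\<in>V - {z}. d \<le> a \<and> a \<le> n - 1}"
    using z by auto
  moreover have "z \<notin> {a\<in>A0. e \<le> a \<and> a \<le> n - 1}" "z \<notin> {a\<in>V - {z}. d \<le> a \<and> a \<le> n - 1}"
    using z by auto
  ultimately show ?thesis
    unfolding exchange_weight_def wt_def using fin z(3) ed by (auto simp: card_insert_if)
qed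

definition admissible_exchange :: "nat set \<Rightarrow> nat \<Rightarrow> nat \<Rightarrow> nat set \<Rightarrow> nat set \<Rightarrow> nat \<Rightarrow> bool" where
  "admissible_exchange T e d A0 V z \<longleftrightarrow>
     z \<in> V \<and> z \<notin> A0 \<and> le_cox_image T e (insert z A0) \<and> le_cox_image T d (V - {z})"

lemma card_ge_3_obtain_other:
  assumes "finite W" "3 \<le> card W"
  obtains z where "z \<in> W" "z \<noteq> a" "z \<noteq> b"
proof -
  have "\<not> W \<subseteq> {a, b}"
  proof
    assume "W \<subseteq> {a, b}"
    then have "card W \<le> card {a, b}" by (rule card_mono[rotated]) simp
    also have "\<dots> \<le> 2" by (simp add: card_insert_le_m1)
    finally show False using assms(2) by simp
  qed
  then show ?thesis using that by blast
qed

locale minimal_exchange =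
  fixes n e d :: nat and T A0 V :: "nat set" and z0 :: nat
  assumes T: "\<forall>a\<in>T. a + 1 \<notin> T"
    and ed: "1 \<le> e" "e \<le> d" "d \<le> n - 1"
    and A0: "A0 \<subseteq> {1..n}" "card A0 = e - 1"
    and V: "V \<subseteq> {1..n}" "card V = d + 1"
    and z0: "admissible_exchange T e d A0 V z0"
    and min0: "\<forall>z\<in>V - A0. exchange_weight n A0 V z0 \<le> exchange_weight n A0 V z"
begin

lemma finite_A0: "finite A0" using A0(1) finite_subset by blast
lemma finite_V: "finite V" using V(1) finite_subset by blast

lemma admissible_z0:
  "z0 \<in> V" "z0 \<notin> A0" "le_cox_image T e (insert z0 A0)" "le_cox_image T d (V - {z0})"
  using z0 unfolding admissible_exchange_def by auto

lemma exchange_weight_V: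
  "z \<in> V \<Longrightarrow> z \<notin> A0 \<Longrightarrow> exchange_weight n A0 V z = card {a\<in>A0. e \<le> a \<and> a \<le> n - 1}
    + card {a\<in>V. d \<le> a \<and> a \<le> n - 1} + (if e \<le> z \<and> z < d then 1 else 0)"
  using exchange_weight_eq[OF finite_A0 finite_V _ _ _ A0(2) V(2) ed] V(1) by auto

lemma exchange_weight_outside_eq:
  assumes "z \<in> V" "z \<notin> A0" "z' \<in> V" "z' \<notin> A0"
    and "\<not> (e \<le> z \<and> z < d)" "\<not> (e \<le> z' \<and> z' < d)"
  shows "exchange_weight n A0 V z = exchange_weight n A0 V z'"
  using assms by (simp add: exchange_weight_V)

lemma insert_z0_large_unique:
  "a \<in> insert z0 A0 \<Longrightarrow> b \<in> insert z0 A0 \<Longrightarrow> e < a \<or> (a = e \<and> e \<notin> T) \<Longrightarrow>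
    e < b \<or> (b = e \<and> e \<notin> T) \<Longrightarrow> a = b"
proof (rule le_cox_image_large_unique[OF admissible_z0(3)])
  show "finite (insert z0 A0)" using finite_A0 by simp
  show "insert z0 A0 \<subseteq> {1..}" using A0(1) V(1) admissible_z0(1) by auto
  show "card (insert z0 A0) = e" using finite_A0 A0(2) admissible_z0(2) ed(1) by simp
qed

lemma z0_lower: "d - 1 \<le> z0"
proof (rule ccontr)
  assume "\<not> d - 1 \<le> z0"
  then have "z0 \<in> {1..<d-1}" using admissible_z0(1) V(1) by auto
  then show False using le_cox_image_initial[OF admissible_z0(4)] by auto
qed

lemma exchange_twin_if_notin:
  assumes dT: "d \<notin> T"
  shows "\<exists>z1. z1 \<noteq> z0 \<and> admissible_exchange T e d A0 V z1
    \<and> exchange_weight n A0 V z1 \<le> exchange_weight n A0 V z0"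
proof -
  have init: "{1..<d} \<subseteq> V - {z0}" using admissible_z0(4) dT unfolding le_cox_image_def by auto
  have z0d: "d \<le> z0"
  proof (rule ccontr)
    assume "\<not> d \<le> z0"
    then have "z0 \<in> {1..<d}" using admissible_z0(1) V(1) by auto
    then show False using init by auto
  qed
  have "V \<subseteq> {1..}" "{1..<d} \<subseteq> V" using V(1) init by auto
  then have "card {a\<in>V. d \<le> a} = 2"
    using card_above_eq[OF finite_V] V(2) ed(1,2) by simp
  then have "card ({a\<in>V. d \<le> a} - {z0}) = 1" using admissible_z0(1) z0d finite_V by simp
  then obtain z1 where z1: "{a\<in>V. d \<le> a} - {z0} = {z1}" by (rule card_1_singletonE)
  then have z1V: "z1 \<in> V" "d \<le> z1" "z1 \<noteq> z0" by auto
  have large: "e < z \<or> (z = e \<and> e \<notin> T)" if "d \<le> z" for z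
    using that ed(2) dT by (cases "z = e") auto
  have z1A: "z1 \<notin> A0" using insert_z0_large_unique[of z1 z0] large[OF z0d] large[OF z1V(2)] z1V(3)
    by blast
  have "le_cox_image T e (insert z1 A0) \<longleftrightarrow> le_cox_image T e (insert z0 (insert z1 A0))"
    using le_cox_image_insert_large[OF large[OF z0d]] by simp
  also have "\<dots> \<longleftrightarrow> le_cox_image T e (insert z0 A0)"
    using le_cox_image_insert_large[OF large[OF z1V(2)], of "insert z0 A0"]
    by (simp add: insert_commute)
  finally have "le_cox_image T e (insert z1 A0)" using admissible_z0(3) by simp
  moreover have "le_cox_image T d (V - {z1})"
    using init z1V dT unfolding le_cox_image_def by auto
  moreover have "exchange_weight n A0 V z1 = exchange_weight n A0 V z0"
    by (rule exchange_weight_outside_eq) (use z1V z1A admissible_z0(1,2) z0d in auto)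
  ultimately show ?thesis using z1V z1A unfolding admissible_exchange_def by auto
qed

context
  assumes dT: "d \<in> T"
begin

lemma two_le_d: "2 \<le> d"
proof (rule ccontr)
  assume "\<not> 2 \<le> d"
  then have d1: "d = 1" "e = 1" using ed by auto
  then have "A0 = {}" using A0(2) finite_A0 by simp
  moreover have "0 \<notin> insert z0 A0" "0 \<notin> V" using A0(1) V(1) admissible_z0(1) by auto
  ultimately have "z0 = 1" "1 \<in> V - {z0}"
    using admissible_z0(3,4) dT d1 unfolding le_cox_image_def by auto
  then show False by simp
qed

lemma card_V_top: "card {a\<in>V. d - 1 \<le> a} = 3"
proof -
  have "V \<subseteq> {1..}" "{1..<d-1} \<subseteq> V" using V(1) le_cox_image_initial[OF admissible_z0(4)] by auto
  then show ?thesis using card_above_eq[OF finite_V] V(2) two_le_d by simp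
qed

lemma obtain_top_partner:
  obtains u0 where "u0 \<in> V" "u0 \<noteq> z0" "u0 = d - 1 \<or> u0 = d"
  using admissible_z0(4) dT that unfolding le_cox_image_def by auto

text \<open>If z0 = d - 1, the exchange with d is admissible and lighter.\<close>

lemma z0_ge_d_if_less:
  assumes less: "e < d"
  shows "d \<le> z0"
proof (rule ccontr)
  assume "\<not> d \<le> z0"
  then have z0e: "z0 = d - 1" using z0_lower by simp
  obtain u0 where "u0 \<in> V" "u0 \<noteq> z0" "u0 = d - 1 \<or> u0 = d" by (rule obtain_top_partner)
  then have dV: "d \<in> V" using z0e by auto
  have "d \<in> A0"
  proof (rule ccontr)
    assume "d \<notin> A0"
    then have "exchange_weight n A0 V z0 \<le> exchange_weight n A0 V d" using min0 dV by auto
    moreover have "e \<le> z0" "z0 < d" using z0e less by auto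
    ultimately show False
      using exchange_weight_V[OF dV \<open>d \<notin> A0\<close>] exchange_weight_V[OF admissible_z0(1,2)] by simp
  qed
  moreover have "e \<notin> T" if "e = d - 1"
  proof
    assume "e \<in> T"
    moreover have "e + 1 = d" using that two_le_d by simp
    ultimately show False using T dT by blast
  qed
  moreover have "e < z0 \<or> (z0 = e \<and> e \<notin> T)"
    using calculation(2) z0e less by (cases "e = d - 1") auto
  ultimately have "z0 = d" using insert_z0_large_unique[of z0 d] less by auto
  then show False using z0e two_le_d by simp
qed

lemma obtain_top_third:
  assumes "u \<in> V - {z0}" "u = d - 1 \<or> u = d"
  obtains z1 where "z1 \<in> V" "d - 1 \<le> z1" "z1 \<noteq> z0" "z1 \<noteq> u"
    "le_cox_image T d (V - {z1})"
proof -
  obtain z1 where z1: "z1 \<in> {a\<in>V. d - 1 \<le> a}" "z1 \<noteq> z0" "z1 \<noteq> u"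
    using card_ge_3_obtain_other[of "{a\<in>V. d - 1 \<le> a}"] card_V_top finite_V by auto
  have "{1..<d-1} \<subseteq> V - {z1}" using le_cox_image_initial[OF admissible_z0(4)] z1(1) by auto
  then have "le_cox_image T d (V - {z1})"
    using assms z1(3) dT unfolding le_cox_image_def by auto
  then show ?thesis using that z1 by auto
qed

lemma exchange_twin_if_less:
  assumes less: "e < d"
  shows "\<exists>z1. z1 \<noteq> z0 \<and> admissible_exchange T e d A0 V z1
    \<and> exchange_weight n A0 V z1 \<le> exchange_weight n A0 V z0"
proof -
  have z0d: "d \<le> z0" using z0_ge_d_if_less[OF less] .
  have A0e: "a \<le> e" if "a \<in> A0" for a
    using insert_z0_large_unique[of a z0] that admissible_z0(2) z0d less by fastforce
  obtain u0 where u0: "u0 \<in> V" "u0 \<noteq> z0" "u0 = d - 1 \<or> u0 = d" by (rule obtain_top_partner)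
  define u where "u = (if d - 1 \<in> V - {z0} then d - 1 else u0)"
  have u: "u \<in> V - {z0}" "u = d - 1 \<or> u = d" using u0 unfolding u_def by auto
  obtain z1 where z1: "z1 \<in> V" "d - 1 \<le> z1" "z1 \<noteq> z0" "z1 \<noteq> u"
    and leV: "le_cox_image T d (V - {z1})" using obtain_top_third[OF u] .
  have z1d: "d \<le> z1" using z1 u unfolding u_def by (cases "z1 = d - 1") auto
  have z1A: "z1 \<notin> A0" using A0e z1d less by fastforce
  have "le_cox_image T e (insert z1 A0) \<longleftrightarrow> le_cox_image T e (insert z0 (insert z1 A0))"
    using le_cox_image_insert_large z0d less by simp
  also have "\<dots> \<longleftrightarrow> le_cox_image T e (insert z0 A0)"
    using le_cox_image_insert_large[of e z1 T "insert z0 A0"] z1d less by (simp add: insert_commute)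
  finally have "le_cox_image T e (insert z1 A0)" using admissible_z0(3) by simp
  moreover have "exchange_weight n A0 V z1 = exchange_weight n A0 V z0"
    by (rule exchange_weight_outside_eq) (use z1 z1A admissible_z0(1,2) z0d z1d in auto)
  ultimately show ?thesis using z1 z1A leV unfolding admissible_exchange_def by auto
qed

lemma A0_eq_insert_top:
  assumes eq: "e = d"
  obtains a where "A0 = insert a {1..<d-1}"
proof -
  have init: "{1..<d-1} \<subseteq> A0"
    using le_cox_image_initial[OF admissible_z0(3)] z0_lower eq by auto
  have "A0 \<subseteq> {1..}" using A0(1) by auto
  then have "card {x\<in>A0. d - 1 \<le> x} = 1"
    using card_above_eq[OF finite_A0 _ init] A0(2) eq two_le_d by simp
  then obtain a where a: "{x\<in>A0. d - 1 \<le> x} = {a}" by (rule card_1_singletonE)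
  have "A0 \<subseteq> insert a {1..<d-1}"
  proof
    fix x assume x: "x \<in> A0"
    then have "1 \<le> x" using A0(1) by auto
    moreover have "x = a" if "d - 1 \<le> x" using a x that by blast
    ultimately show "x \<in> insert a {1..<d-1}" by (cases "d - 1 \<le> x") auto
  qed
  moreover have "insert a {1..<d-1} \<subseteq> A0" using a init by auto
  ultimately show ?thesis using that by blast
qed

lemma exchange_twin_if_eq:
  assumes eq: "e = d"
  shows "\<exists>z1. z1 \<noteq> z0 \<and> admissible_exchange T e d A0 V z1
    \<and> exchange_weight n A0 V z1 \<le> exchange_weight n A0 V z0"
proof -
  have weight: "exchange_weight n A0 V z = exchange_weight n A0 V z0" if "z \<in> V" "z \<notin> A0" for z
    by (rule exchange_weight_outside_eq) (use that admissible_z0(1,2) eq in auto)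
  obtain a where A0_eq: "A0 = insert a {1..<d-1}" using A0_eq_insert_top[OF eq] .
  have le_insert: "le_cox_image T e (insert z (insert a {1..<d-1}))"
    if "z = d - 1 \<or> z = d \<or> a = d - 1 \<or> a = d" for z
    using that eq dT unfolding le_cox_image_def by auto
  obtain u0 where u0: "u0 \<in> V" "u0 \<noteq> z0" "u0 = d - 1 \<or> u0 = d" by (rule obtain_top_partner)
  show ?thesis
  proof (cases "a = d - 1 \<or> a = d")
    case True
    define u where "u = (if a \<in> V then a else u0)"
    have "a \<noteq> z0" using admissible_z0(2) A0_eq by auto
    then have u: "u \<in> V - {z0}" "u = d - 1 \<or> u = d" using u0 True unfolding u_def by auto
    obtain z1 where z1: "z1 \<in> V" "d - 1 \<le> z1" "z1 \<noteq> z0" "z1 \<noteq> u"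
      and leV: "le_cox_image T d (V - {z1})" using obtain_top_third[OF u] .
    have "z1 \<noteq> a" using z1 unfolding u_def by auto
    then have "z1 \<notin> A0" using z1(2) A0_eq by auto
    then show ?thesis using z1 leV le_insert[of z1] True weight[of z1] A0_eq
      unfolding admissible_exchange_def by auto
  next
    case False
    then have "z0 = d - 1 \<or> z0 = d"
      using admissible_z0(3) A0_eq eq dT unfolding le_cox_image_def by auto
    moreover have "{1..<d-1} \<subseteq> V - {u0}"
      using le_cox_image_initial[OF admissible_z0(4)] u0(3) by auto
    ultimately have "le_cox_image T d (V - {u0})"
      using admissible_z0(1) u0(2) dT unfolding le_cox_image_def by auto
    moreover have "u0 \<notin> A0" using u0(3) False A0_eq by auto
    ultimately show ?thesis using u0 le_insert[of u0] weight[of u0] A0_eq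
      unfolding admissible_exchange_def by auto
  qed
qed

end

lemma exchange_twin:
  "\<exists>z1. z1 \<noteq> z0 \<and> admissible_exchange T e d A0 V z1
    \<and> exchange_weight n A0 V z1 \<le> exchange_weight n A0 V z0"
  using exchange_twin_if_notin exchange_twin_if_less exchange_twin_if_eq ed(2)
  by (cases "d \<in> T") (auto simp: le_less)

end

section \<open>Relations with a single missing element\<close>

definition exchange_monomial :: "nat list \<Rightarrow> nat list \<Rightarrow> nat \<Rightarrow> nat \<Rightarrow> monom" where
  "exchange_monomial J L y z = {#insert z (set J - {y}), insert y (set L) - {z}#}"

context
  fixes J L :: "nat list" and k y :: nat
  assumes dJ: "distinct J" and dL: "distinct L" and kJ: "k \<le> length J"
    and y: "prefix_set J k - set L = {y}"
    and notX: "\<not> (length J = length L \<and> suffix_set J k \<subseteq> set L)"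
begin

lemma missing_element_props:
  "y \<in> prefix_set J k" "y \<notin> set L" "y \<in> set J" "y \<notin> suffix_set J k"
  "prefix_set J k \<inter> set L = prefix_set J k - {y}" "card (prefix_set J k \<inter> set L) = k - 1"
  "set J - {y} = (prefix_set J k \<inter> set L) \<union> suffix_set J k" "1 \<le> k"
proof -
  show y1: "y \<in> prefix_set J k" "y \<notin> set L" using y by auto
  show y2: "y \<in> set J" using y1 prefix_Un_suffix[OF dJ kJ] by auto
  show y3: "y \<notin> suffix_set J k" using y1 prefix_suffix_disjoint[OF dJ kJ] by auto
  show PL: "prefix_set J k \<inter> set L = prefix_set J k - {y}" using y by auto
  show "card (prefix_set J k \<inter> set L) = k - 1"
    using PL y1 card_prefix_set[OF dJ kJ] by (simp add: prefix_set_def)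
  show "set J - {y} = (prefix_set J k \<inter> set L) \<union> suffix_set J k"
    using PL y3 prefix_Un_suffix[OF dJ kJ] by auto
  show "1 \<le> k" using y1 by (cases k) (auto simp: prefix_set_def)
qed

lemma exchange_monomial_self: "exchange_monomial J L y y = {#set J, set L#}"
  using missing_element_props(2,3) by (auto simp: exchange_monomial_def insert_absorb)

lemma nonzero_exchange_shape:
  assumes S: "S \<in> index_subsets L k" and d: "distinct (Jprime J L S) \<and> distinct (Lprime J L S)"
  obtains z where "z \<in> set L" "z \<notin> set J" "nth L ` S = insert z (prefix_set J k \<inter> set L)"
    "{#set (Jprime J L S), set (Lprime J L S)#} = exchange_monomial J L y z"
proof -
  have c: "nth L ` S \<inter> suffix_set J k = {}" "prefix_set J k \<inter> set L \<subseteq> nth L ` S"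
    using distinct_exchange_iff[OF dJ dL kJ S] d by auto
  have fin: "finite (nth L ` S)"
    using index_subsetD[OF dJ dL kJ S] by (meson finite_atLeastLessThan finite_imageI finite_subset)
  have "card (nth L ` S - (prefix_set J k \<inter> set L)) = 1"
    using card_Diff_subset[OF _ c(2)] missing_element_props(6,8)
      card_image_index_subset[OF dL S] fin
    by (simp add: finite_subset)
  then obtain z where z: "nth L ` S - (prefix_set J k \<inter> set L) = {z}" by (rule card_1_singletonE)
  then have LS: "nth L ` S = insert z (prefix_set J k \<inter> set L)" using c(2) by auto
  have zL: "z \<in> set L" using image_index_subset[OF dL S] LS by auto
  have zP: "z \<notin> prefix_set J k" using z zL by auto
  have zJ: "z \<notin> set J" using zP c(1) LS prefix_Un_suffix[OF dJ kJ] by auto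
  have "set (Jprime J L S) = insert z (set J - {y})"
    using set_Jprime_eq[OF dJ dL kJ S] LS missing_element_props(7) by auto
  moreover have "set (Lprime J L S) = insert y (set L) - {z}"
    using set_Lprime_eq[OF dJ dL kJ S] LS zP y missing_element_props(1) by auto
  ultimately show ?thesis using that zL zJ LS by (simp add: exchange_monomial_def)
qed

lemma exchange_index_subset:
  assumes z: "z \<in> set L" "z \<notin> set J"
  obtains S where "S \<in> index_subsets L k" "distinct (Jprime J L S) \<and> distinct (Lprime J L S)"
    "nth L ` S = insert z (prefix_set J k \<inter> set L)"
proof -
  let ?W = "insert z (prefix_set J k \<inter> set L)"
  have "z \<notin> prefix_set J k \<inter> set L" using z prefix_Un_suffix[OF dJ kJ] by auto
  then have "card ?W = k"
    using missing_element_props(6,8) by (simp add: prefix_set_def)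
  moreover have "?W \<subseteq> set L" using z by auto
  ultimately obtain S where S: "S \<in> index_subsets L k" "nth L ` S = ?W"
    using index_subsetE[OF dJ dL kJ] by metis
  moreover have "distinct (Jprime J L S) \<and> distinct (Lprime J L S)"
    using distinct_exchange_iff[OF dJ dL kJ S(1)] S(2) z prefix_suffix_disjoint[OF dJ kJ]
      prefix_Un_suffix[OF dJ kJ] by auto
  ultimately show ?thesis using that by blast
qed

text \<open>Two exchanges can only coincide with the factors swapped, which needs |J| = |L| and
  Q \<subseteq> L.\<close>

lemma exchange_monomial_inj:
  assumes z: "z \<in> insert y (set L)" "z \<notin> set J - {y}"
    and z': "z' \<in> insert y (set L)" "z' \<notin> set J - {y}"
    and eq: "exchange_monomial J L y z = exchange_monomial J L y z'"
  shows "z = z'"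
proof (rule ccontr)
  assume ne: "z \<noteq> z'"
  then have swapped: "insert z (set J - {y}) = insert y (set L) - {z'}"
    "insert y (set L) - {z} = insert z' (set J - {y})"
    using eq z by (auto simp: exchange_monomial_def add_mset_pair_eq_iff)
  have "length J \<noteq> 0" using missing_element_props(3) by auto
  then have "card (insert z (set J - {y})) = length J"
    using z(2) missing_element_props(3) distinct_card[OF dJ] by simp
  moreover have "card (insert y (set L) - {z'}) = length L"
    using z'(1) missing_element_props(2) distinct_card[OF dL] by simp
  ultimately have "length J = length L" using swapped(1) by simp
  moreover have "suffix_set J k \<subseteq> set L"
    using swapped(1) missing_element_props(4,7) by auto
  ultimately show False using notX by simp
qed

lemma nonzero_term_exchange:
  assumes S: "S \<in> index_subsets L k" and nz: "pprod (Jprime J L S) (Lprime J L S) m \<noteq> 0"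
  obtains z where "z \<in> set L" "z \<notin> set J" "nth L ` S = insert z (prefix_set J k \<inter> set L)"
    "m = exchange_monomial J L y z"
  using nonzero_exchange_shape[OF S] nz that by (auto simp: pprod_nonzero_iff)

lemma plucker_support_exchange:
  assumes "plucker J L k m \<noteq> 0"
  obtains z where "z \<in> insert y (set L)" "z \<notin> set J - {y}" "m = exchange_monomial J L y z"
proof (cases "pprod J L m = 0")
  case True
  then obtain S where "S \<in> index_subsets L k" "pprod (Jprime J L S) (Lprime J L S) m \<noteq> 0"
    using assms sum.not_neutral_contains_not_neutral by (force simp: plucker_apply)
  then show ?thesis using nonzero_term_exchange that by blast
next
  case False
  then show ?thesis
    using that[of y] exchange_monomial_self missing_element_props(3)
    by (auto simp: pprod_nonzero_iff)
qed

lemma nonzero_term_at_exchange_monomial: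
  assumes z: "z \<in> insert y (set L)" "z \<notin> set J - {y}" and S: "S \<in> index_subsets L k"
    and nz: "pprod (Jprime J L S) (Lprime J L S) (exchange_monomial J L y z) \<noteq> 0"
  shows "nth L ` S = insert z (prefix_set J k \<inter> set L) \<and> z \<noteq> y"
proof -
  obtain z' where z': "z' \<in> set L" "z' \<notin> set J" "nth L ` S = insert z' (prefix_set J k \<inter> set L)"
    "exchange_monomial J L y z = exchange_monomial J L y z'" using nonzero_term_exchange[OF S nz] .
  then have "z = z'" using exchange_monomial_inj[OF z] by auto
  then show ?thesis using z' missing_element_props(3) by auto
qed

lemma plucker_exchange_monomial_nonzero:
  assumes z: "z \<in> insert y (set L)" "z \<notin> set J - {y}"
  shows "plucker J L k (exchange_monomial J L y z) \<noteq> 0"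
proof -
  let ?m = "exchange_monomial J L y z"
  show ?thesis
  proof (cases "z = y")
    case True
    then have "(\<Sum>S\<in>index_subsets L k. pprod (Jprime J L S) (Lprime J L S) ?m) = 0"
      using nonzero_term_at_exchange_monomial[OF z] by (intro sum.neutral) blast
    moreover have "pprod J L ?m \<noteq> 0"
      using True exchange_monomial_self dJ dL by (simp add: pprod_nonzero_iff)
    ultimately show ?thesis by (simp add: plucker_apply)
  next
    case False
    then have zL: "z \<in> set L" "z \<notin> set J" using z by auto
    have "?m \<noteq> {#set J, set L#}"
      using exchange_monomial_inj[OF z, of y] exchange_monomial_self False missing_element_props(3)
      by auto
    then have "pprod J L ?m = 0" by (simp add: pprod_def)
    obtain Sz where Sz: "Sz \<in> index_subsets L k"
      "distinct (Jprime J L Sz) \<and> distinct (Lprime J L Sz)"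
      "nth L ` Sz = insert z (prefix_set J k \<inter> set L)" using exchange_index_subset[OF zL] .
    have "(\<Sum>S\<in>index_subsets L k. pprod (Jprime J L S) (Lprime J L S) ?m)
        = pprod (Jprime J L Sz) (Lprime J L Sz) ?m
          + (\<Sum>S\<in>index_subsets L k - {Sz}. pprod (Jprime J L S) (Lprime J L S) ?m)"
      by (rule sum.remove[OF finite_index_subsets Sz(1)])
    also have "(\<Sum>S\<in>index_subsets L k - {Sz}. pprod (Jprime J L S) (Lprime J L S) ?m) = 0"
      using nonzero_term_at_exchange_monomial[OF z] Sz(3)
        index_subsets_image_inj[OF dJ dL kJ _ Sz(1)]
      by (intro sum.neutral) force
    finally have "plucker J L k ?m = - pprod (Jprime J L Sz) (Lprime J L Sz) ?m"
      using \<open>pprod J L ?m = 0\<close> by (simp add: plucker_apply)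
    moreover obtain z' where z': "z' \<notin> set J" "nth L ` Sz = insert z' (prefix_set J k \<inter> set L)"
      "{#set (Jprime J L Sz), set (Lprime J L Sz)#} = exchange_monomial J L y z'"
      using nonzero_exchange_shape[OF Sz(1,2)] by metis
    moreover have "z' = z"
      using z'(1,2) Sz(3) zL(2) prefix_Un_suffix[OF dJ kJ] by blast
    ultimately show ?thesis
      using Sz(2) pprod_nonzero_iff[of "Jprime J L Sz" "Lprime J L Sz" ?m] by auto
  qed
qed

end

section \<open>Non-degeneration\<close>

lemma kill_init_w_nonzero_iff:
  "kill v (init_w n f) m \<noteq> 0 \<longleftrightarrow> (\<forall>I\<in>#m. subset_le I (v ` {1..card I})) \<and> f m \<noteq> 0
    \<and> (\<forall>m'. f m' \<noteq> 0 \<longrightarrow> mweight n m \<le> mweight n m')"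
  unfolding kill_def init_w_def by auto

lemma mweight_pair: "mweight n {#A, B#} = wt n A + wt n B"
  unfolding mweight_def by simp

lemma subset_le_pair_iff:
  assumes ks: "distinct ks" "\<forall>a\<in>set ks. 1 \<le> a \<and> a + 1 \<notin> set ks"
    and AB: "A \<subseteq> {1..n}" "B \<subseteq> {1..n}" "card A = e" "card B = d" and ed: "1 \<le> e" "e \<le> d" "d < n"
  shows "(\<forall>I\<in>#{#A, B#}. subset_le I ((coxc n \<circ> sprod ks) ` {1..card I}))
    \<longleftrightarrow> le_cox_image (set ks) e A \<and> le_cox_image (set ks) d B"
  using subset_le_coxc_sprod_iff[OF ks AB(1)] subset_le_coxc_sprod_iff[OF ks AB(2)] AB ed by auto

lemma card_prefix_missing_eq_1:
  assumes dJ: "distinct J" and dL: "distinct L" and kJ: "k \<le> length J" and JL: "length J \<le> length L"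
    and T: "\<forall>a\<in>T. a + 1 \<notin> T"
    and A: "le_cox_image T (length J) A" and B: "le_cox_image T (length L) B"
    and AB: "A \<inter> B = set J \<inter> set L"
    and notP: "\<not> prefix_set J k \<subseteq> set L"
    and notX: "\<not> (length J = length L \<and> suffix_set J k \<subseteq> set L)"
  shows "card (prefix_set J k - set L) = 1"
proof -
  define e d where "e = length J" and "d = length L"
  have "{1..<e-1} \<subseteq> {1..<d-1}" using JL unfolding e_def d_def by auto
  then have common: "{1..<e-1} \<subseteq> set J \<inter> set L"
    using le_cox_image_initial[OF A] le_cox_image_initial[OF B] AB unfolding e_def d_def by blast
  have card_J: "card (set J - set L) = e - card (set J \<inter> set L)"
    using card_Diff_subset_Int[of "set J" "set L"] distinct_card[OF dJ] unfolding e_def by simp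
  moreover have "e - 2 \<le> card (set J \<inter> set L)"
    using card_mono[OF _ common] by simp
  ultimately have le2: "card (set J - set L) \<le> 2" by simp
  have sub: "prefix_set J k - set L \<subseteq> set J - set L" using prefix_Un_suffix[OF dJ kJ] by blast
  then have le: "card (prefix_set J k - set L) \<le> card (set J - set L)" by (intro card_mono) auto
  have "prefix_set J k - set L \<noteq> {}" using notP by blast
  then have pos: "1 \<le> card (prefix_set J k - set L)"
    by (simp add: prefix_set_def Suc_le_eq card_gt_0_iff)
  show ?thesis
  proof (rule ccontr)
    assume "card (prefix_set J k - set L) \<noteq> 1"
    then have two: "card (prefix_set J k - set L) = 2" "card (set J - set L) = 2"
      using le le2 pos by auto
    then have "prefix_set J k - set L = set J - set L" using card_seteq[OF _ sub] by simp
    then have "suffix_set J k \<subseteq> set L"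
      using prefix_suffix_disjoint[OF dJ kJ] prefix_Un_suffix[OF dJ kJ] by blast
    then have ed: "e < d" using notX JL unfolding e_def d_def by auto
    have "2 \<le> e"
      using two(2) card_mono[of "set J" "set J - set L"] distinct_card[OF dJ] unfolding e_def
      by fastforce
    then have "e - 1 \<in> set J \<inter> set L \<or> e \<in> set J \<inter> set L"
      using le_cox_image_common_element[OF T A B] ed AB unfolding e_def d_def by auto
    moreover have "card (set J \<inter> set L) = e - 2" using card_J two(2) by simp
    then have "set J \<inter> set L = {1..<e-1}" using card_seteq[OF _ common] \<open>2 \<le> e\<close> by simp
    ultimately show False by auto
  qed
qed

lemma separated_list_props:
  fixes ks :: "nat list"
  assumes "set ks \<subseteq> {1..n}"
    and sep: "\<forall>i < length ks. \<forall>j < length ks. i \<noteq> j \<longrightarrow> ks ! i + 1 < ks ! j \<or> ks ! j + 1 < ks ! i"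
  shows "distinct ks" "\<forall>a\<in>set ks. 1 \<le> a \<and> a + 1 \<notin> set ks"
proof -
  show "distinct ks" unfolding distinct_conv_nth
  proof (intro allI impI)
    fix i j assume "i < length ks" "j < length ks" "i \<noteq> j"
    then have "ks ! i + 1 < ks ! j \<or> ks ! j + 1 < ks ! i" using sep by blast
    then show "ks ! i \<noteq> ks ! j" by auto
  qed
  have "a + 1 \<notin> set ks" if aks: "a \<in> set ks" for a
  proof
    assume "a + 1 \<in> set ks"
    then obtain j where j: "j < length ks" "ks ! j = a + 1" by (auto simp: in_set_conv_nth)
    obtain i where i: "i < length ks" "ks ! i = a" using aks by (auto simp: in_set_conv_nth)
    have "ks ! i + 1 < ks ! j \<or> ks ! j + 1 < ks ! i" using sep i j by fastforce
    then show False using i j by simp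
  qed
  then show "\<forall>a\<in>set ks. 1 \<le> a \<and> a + 1 \<notin> set ks" using assms(1) by auto
qed

context
  fixes n k :: nat and ks J L :: "nat list"
  assumes ks: "distinct ks" "\<forall>a\<in>set ks. 1 \<le> a \<and> a + 1 \<notin> set ks"
    and J: "distinct J" "set J \<subseteq> {1..n}" "1 \<le> length J" "k \<le> length J"
    and L: "distinct L" "set L \<subseteq> {1..n}" "length J \<le> length L" "length L < n"
begin

lemma surviving_monomial_single_missing:
  assumes surv: "kill (coxc n \<circ> sprod ks) (init_w n (plucker J L k)) m \<noteq> 0"
  obtains y where "prefix_set J k - set L = {y}"
    "\<not> (length J = length L \<and> suffix_set J k \<subseteq> set L)"
proof -
  have R0: "plucker J L k m \<noteq> 0" using surv kill_init_w_nonzero_iff by blast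
  obtain A B where AB: "m = {#A, B#}" "card A = length J" "card B = length L"
    "A \<inter> B = set J \<inter> set L" "A \<union> B = set J \<union> set L"
    using plucker_support[OF J(1) L(1) J(4) R0] by blast
  moreover have "A \<subseteq> {1..n}" "B \<subseteq> {1..n}" using AB(5) J(2) L(2) by auto
  ultimately have "le_cox_image (set ks) (length J) A" "le_cox_image (set ks) (length L) B"
    using surv subset_le_pair_iff[OF ks, of A n B "length J" "length L"] J(3) L(3,4)
    by (auto simp: kill_init_w_nonzero_iff)
  moreover have "\<not> prefix_set J k \<subseteq> set L" "\<not> (length J = length L \<and> suffix_set J k \<subseteq> set L)"
    using plucker_eq_0_if_prefix_subset[OF J(1) L(1) J(4)]
      plucker_eq_0_if_suffix_subset[OF J(1) L(1) J(4)] R0 by blast+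
  ultimately have "card (prefix_set J k - set L) = 1"
    using card_prefix_missing_eq_1[OF J(1) L(1) J(4) L(3), of "set ks"] ks(2) AB(4) by blast
  then show ?thesis using that \<open>\<not> (length J = length L \<and> suffix_set J k \<subseteq> set L)\<close>
    by (metis card_1_singletonE)
qed

context
  fixes y :: nat
  assumes y: "prefix_set J k - set L = {y}"
    and notX: "\<not> (length J = length L \<and> suffix_set J k \<subseteq> set L)"
begin

lemma exchange_monomial_survives_iff:
  assumes z: "z \<in> insert y (set L)" "z \<notin> set J - {y}"
  shows "kill (coxc n \<circ> sprod ks) (init_w n (plucker J L k)) (exchange_monomial J L y z) \<noteq> 0 \<longleftrightarrow>
      admissible_exchange (set ks) (length J) (length L) (set J - {y}) (insert y (set L)) z
      \<and> (\<forall>m'. plucker J L k m' \<noteq> 0 \<longrightarrow>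
          exchange_weight n (set J - {y}) (insert y (set L)) z \<le> mweight n m')"
proof -
  note facts = missing_element_props[OF J(1) L(1) J(4) y notX]
  have "card (insert z (set J - {y})) = length J" "card (insert y (set L) - {z}) = length L"
    using z facts(2,3) distinct_card[OF J(1)] distinct_card[OF L(1)] J(3) by auto
  moreover have "insert z (set J - {y}) \<subseteq> {1..n}" "insert y (set L) - {z} \<subseteq> {1..n}"
    using z J(2) L(2) facts(3) by auto
  ultimately show ?thesis
    using subset_le_pair_iff[OF ks] plucker_exchange_monomial_nonzero[OF J(1) L(1) J(4) y notX z]
      J(3) L(3,4) z
    unfolding kill_init_w_nonzero_iff exchange_monomial_def admissible_exchange_def
      exchange_weight_def mweight_pair by auto
qed

lemma exists_other_surviving_monomial:
  assumes surv: "kill (coxc n \<circ> sprod ks) (init_w n (plucker J L k)) m \<noteq> 0"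
  shows "\<exists>m'. m' \<noteq> m \<and> kill (coxc n \<circ> sprod ks) (init_w n (plucker J L k)) m' \<noteq> 0"
proof -
  define A0 V where "A0 = set J - {y}" and "V = insert y (set L)"
  note facts = missing_element_props[OF J(1) L(1) J(4) y notX]
  have A0: "A0 \<subseteq> {1..n}" "card A0 = length J - 1"
    using J(2) facts(3) distinct_card[OF J(1)] unfolding A0_def by auto
  have V: "V \<subseteq> {1..n}" "card V = length L + 1"
    using L(2) J(2) facts(2,3) distinct_card[OF L(1)] unfolding V_def by auto
  obtain z0 where z0: "z0 \<in> V" "z0 \<notin> A0" "m = exchange_monomial J L y z0"
    using plucker_support_exchange[OF J(1) L(1) J(4) y notX] surv kill_init_w_nonzero_iff
    unfolding A0_def V_def by metis
  then have adm0: "admissible_exchange (set ks) (length J) (length L) A0 V z0"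
    and min: "\<forall>m'. plucker J L k m' \<noteq> 0 \<longrightarrow> exchange_weight n A0 V z0 \<le> mweight n m'"
    using exchange_monomial_survives_iff surv unfolding A0_def V_def by auto
  have min0: "\<forall>z\<in>V - A0. exchange_weight n A0 V z0 \<le> exchange_weight n A0 V z"
  proof
    fix z assume "z \<in> V - A0"
    then have "plucker J L k (exchange_monomial J L y z) \<noteq> 0"
      using plucker_exchange_monomial_nonzero[OF J(1) L(1) J(4) y notX]
      unfolding A0_def V_def by auto
    moreover have "mweight n (exchange_monomial J L y z) = exchange_weight n A0 V z"
      unfolding exchange_monomial_def exchange_weight_def mweight_pair A0_def V_def ..
    ultimately show "exchange_weight n A0 V z0 \<le> exchange_weight n A0 V z" using min by metis
  qed
  have "minimal_exchange n (length J) (length L) (set ks) A0 V z0"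
    by unfold_locales (use ks(2) J(3) L(3,4) A0 V adm0 min0 in auto)
  then obtain z1 where z1: "z1 \<noteq> z0" "admissible_exchange (set ks) (length J) (length L) A0 V z1"
    "exchange_weight n A0 V z1 \<le> exchange_weight n A0 V z0"
    using minimal_exchange.exchange_twin by blast
  then have "kill (coxc n \<circ> sprod ks) (init_w n (plucker J L k)) (exchange_monomial J L y z1) \<noteq> 0"
    using exchange_monomial_survives_iff min unfolding A0_def V_def
    by (fastforce simp: admissible_exchange_def)
  moreover have "exchange_monomial J L y z1 \<noteq> m"
    using exchange_monomial_inj[OF J(1) L(1) J(4) y notX] z0 z1(1,2)
    unfolding admissible_exchange_def A0_def V_def by metis
  ultimately show ?thesis by blast
qed

end

end

theorem proposition4p10:
  fixes n :: nat and ks :: "nat list"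
  assumes "n \<ge> 2"
    and "set ks \<subseteq> {1..n-1}"
    and "\<forall>i < length ks. \<forall>j < length ks. i \<noteq> j \<longrightarrow>
           ks ! i + 1 < ks ! j \<or> ks ! j + 1 < ks ! i"
  shows "\<forall>J L k. distinct J \<and> distinct L \<and> set J \<subseteq> {1..n} \<and> set L \<subseteq> {1..n}
           \<and> 1 \<le> length J \<and> length J \<le> length L \<and> length L \<le> n - 1
           \<and> 1 \<le> k \<and> k \<le> length J
           \<longrightarrow> \<not> degenerates n (coxc n \<circ> sprod ks) J L k"
proof (intro allI impI notI)
  fix J L :: "nat list" and k :: nat
  assume JLk: "distinct J \<and> distinct L \<and> set J \<subseteq> {1..n} \<and> set L \<subseteq> {1..n}
           \<and> 1 \<le> length J \<and> length J \<le> length L \<and> length L \<le> n - 1 \<and> 1 \<le> k \<and> k \<le> length J"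
    and "degenerates n (coxc n \<circ> sprod ks) J L k"
  then obtain m where surv: "kill (coxc n \<circ> sprod ks) (init_w n (plucker J L k)) m \<noteq> 0"
    and unique: "\<And>m'. kill (coxc n \<circ> sprod ks) (init_w n (plucker J L k)) m' \<noteq> 0 \<Longrightarrow> m' = m"
    unfolding degenerates_def by blast
  have ks: "distinct ks" "\<forall>a\<in>set ks. 1 \<le> a \<and> a + 1 \<notin> set ks"
    using separated_list_props[of ks "n-1"] assms(2,3) by auto
  have J: "distinct J" "set J \<subseteq> {1..n}" "1 \<le> length J" "k \<le> length J"
    and L: "distinct L" "set L \<subseteq> {1..n}" "length J \<le> length L" "length L < n"
    using JLk by auto
  obtain y where "prefix_set J k - set L = {y}" "\<not> (length J = length L \<and> suffix_set J k \<subseteq> set L)"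
    using surviving_monomial_single_missing[OF ks J L surv] .
  then show False
    using exists_other_surviving_monomial[OF ks J L _ _ surv] unique by blast
qed

end
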